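(* Let $n\ge1$, $p\ge4$, $\mathbb{T}^n=\mathbb{R}^n/\mathbb{Z}^n$, and $b\in C^\infty(\mathbb{T}^n\times[0,\infty);\mathbb{R}^n)$ with $\|b\|_{C^k}<\infty$ for all $k$. Let $W_t$ be a standard $n$-dimensional Brownian motion; for $\varepsilon>0$ let $(X^\varepsilon_t,V^\varepsilon_t)$ solve $dX^\varepsilon_t=V^\varepsilon_tdt$, $dV^\varepsilon_t=\frac1\varepsilon(b(X^\varepsilon_t,t)-V^\varepsilon_t)dt+\sqrt{2/\varepsilon}\,dW_t$, with $X^\varepsilon_0=x$ deterministic and $\tilde V^\varepsilon_0:=V^\varepsilon_0-b(x,0)$ satisfying $\mathbf{E}\tilde V^\varepsilon_0=0$, $\mathbf{E}|\tilde V^\varepsilon_0|^p<\infty$. Let $Y_t=X^\varepsilon_t-\mathbf{E}X^\varepsilon_t$. Then there exist $C_1,C_2>0$, depending only on $b$ (and on $\mathbf{E}|\tilde V^\varepsilon_0|^4$), such that for all $t\ge0$ $$\mathbf{E}|Y_t|^4\le C_1(\varepsilon^2t^2+\varepsilon^4)e^{C_2t} .$$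
   Context: For $f$ on $S=\mathbb{T}^n\times[0,\infty)$, $\|f\|_{C^k}=\max_{|\alpha|\le k}\sup_{z\in S}|D^\alpha f(z)|$. $b$ is viewed as $\mathbb{Z}^n$-periodic in $x$ on $\mathbb{R}^n$ and $X^\varepsilon_t\in\mathbb{R}^n$ is the lifted position, so $\mathbf{E}X^\varepsilon_t\in\mathbb{R}^n$. $V^\varepsilon_0$ is measurable with respect to the initial sigma-algebra of the filtration of $W$. *)

theory Defs
  imports "HOL-Probability.Probability"
begin

text \<open>Df us z is the iterated
  derivative of f at z applied to the directions in the list us; the bound over
  directions from Basis of length k is the C^k norm condition (max over partial
  derivatives of order exactly k).\<close>
definition smooth_bounded :: "('a::euclidean_space \<Rightarrow> 'b::real_normed_vector) \<Rightarrow> 'a set \<Rightarrow> bool" where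
  "smooth_bounded f S \<longleftrightarrow>
     (\<exists>Df :: 'a list \<Rightarrow> 'a \<Rightarrow> 'b.
        (\<forall>z\<in>S. Df [] z = f z) \<and>
        (\<forall>us. \<forall>z\<in>S. (Df us has_derivative (\<lambda>h. Df (h # us) z)) (at z within S)) \<and>
        (\<forall>k. \<exists>B. \<forall>us z. length us = k \<longrightarrow> set us \<subseteq> Basis \<longrightarrow> z \<in> S \<longrightarrow> norm (Df us z) \<le> B))"

definition is_BM1 :: "'w measure \<Rightarrow> (real \<Rightarrow> 'w \<Rightarrow> real) \<Rightarrow> bool" where
  "is_BM1 M B \<longleftrightarrow>
     (\<forall>t\<ge>0. B t \<in> borel_measurable M) \<and>
     (\<forall>\<omega>\<in>space M. B 0 \<omega> = 0 \<and> continuous_on {0..} (\<lambda>t. B t \<omega>)) \<and>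
     (\<forall>s t. 0 \<le> s \<and> s < t \<longrightarrow>
        distributed M lborel (\<lambda>\<omega>. B t \<omega> - B s \<omega>) (\<lambda>y. ennreal (normal_density 0 (sqrt (t - s)) y))) \<and>
     (\<forall>(ts :: nat \<Rightarrow> real) k. (\<forall>j<k. 0 \<le> ts j \<and> ts j < ts (Suc j)) \<longrightarrow>
        prob_space.indep_vars M (\<lambda>_. borel) (\<lambda>j \<omega>. B (ts (Suc j)) \<omega> - B (ts j) \<omega>) {..<k})"

definition is_std_BM :: "'w measure \<Rightarrow> (real \<Rightarrow> 'w \<Rightarrow> real^'n) \<Rightarrow> bool" where
  "is_std_BM M W \<longleftrightarrow>
     prob_space M \<and>
     (\<forall>i. is_BM1 M (\<lambda>t \<omega>. W t \<omega> $ i)) \<and>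
     prob_space.indep_vars M (\<lambda>_. PiM {0..} (\<lambda>_. borel))
        (\<lambda>i \<omega>. \<lambda>t\<in>{0..}. W t \<omega> $ i) UNIV"

text \<open>(X,V) solves dX = V dt, dV = (1/eps)(b(X,t) - V) dt + sqrt(2/eps) dW, X_0 = x,
  written in integral form (additive noise, so no stochastic integral is needed).\<close>
definition langevin_solution ::
  "'w measure \<Rightarrow> (real^'n \<Rightarrow> real \<Rightarrow> real^'n) \<Rightarrow> real \<Rightarrow> real^'n \<Rightarrow>
   (real \<Rightarrow> 'w \<Rightarrow> real^'n) \<Rightarrow> (real \<Rightarrow> 'w \<Rightarrow> real^'n) \<Rightarrow> (real \<Rightarrow> 'w \<Rightarrow> real^'n) \<Rightarrow> bool" where
  "langevin_solution M b \<epsilon> x W X V \<longleftrightarrow>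
     (\<forall>t\<ge>0. X t \<in> borel_measurable M \<and> V t \<in> borel_measurable M) \<and>
     (AE \<omega> in M. continuous_on {0..} (\<lambda>t. X t \<omega>) \<and> continuous_on {0..} (\<lambda>t. V t \<omega>) \<and>
        (\<forall>t\<ge>0. X t \<omega> = x + integral {0..t} (\<lambda>s. V s \<omega>) \<and>
                V t \<omega> = V 0 \<omega> + (1 / \<epsilon>) *\<^sub>R integral {0..t} (\<lambda>s. b (X s \<omega>) s - V s \<omega>)
                         + sqrt (2 / \<epsilon>) *\<^sub>R W t \<omega>))"

end

theory Submission
  imports Defs
begin

(*
  Eliminating the velocity by variation of constants gives the mild form
    X_t = x + eps (1 - e^(-t/eps)) V_0 + int_0^t (1 - e^(-(t-s)/eps)) b(X_s, s) ds
            + sqrt(2/eps) int_0^t e^(-(t-s)/eps) W_s ds.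
  For two sample paths the drift terms differ by at most L int_0^t |X_s - X'_s| ds, so by
  Gronwall |X_t - X'_t| is controlled by the sizes
    P_s = eps |V_0 - b(x,0)| + sqrt(2/eps) int_0^s e^(-(s-u)/eps) |W_u| du
  of the two paths.  The kernel has mass at most eps, so Jensen and E|W_u|^4 <= 3 n^2 u^2 give
  E P_s^4 <= 8 eps^4 E|V_0 - b(x,0)|^4 + 96 n^2 eps^2 s^2.  Finally
  |X_t(w) - E X_t|^4 <= E_w' |X_t(w) - X_t(w')|^4 by Jensen, so the centered fourth moment is
  bounded by the pathwise estimate without ever computing E X_t.
*)

section \<open>Inequalities for fourth powers and integrals\<close>

lemma power4_ge_tangent: "a ^ 4 + 4 * a ^ 3 * (x - a) \<le> (x::real) ^ 4"
proof -
  have "x ^ 4 - (a ^ 4 + 4 * a ^ 3 * (x - a)) = (x - a)\<^sup>2 * ((x + a)\<^sup>2 + 2 * a\<^sup>2)"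
    by (simp add: algebra_simps power2_eq_square power4_eq_xxxx power3_eq_cube)
  moreover have "0 \<le> (x - a)\<^sup>2 * ((x + a)\<^sup>2 + 2 * a\<^sup>2)"
    by simp
  ultimately show ?thesis
    by linarith
qed

lemma power4_add_le: "(a + b) ^ 4 \<le> 8 * (a ^ 4 + b ^ 4 :: real)"
proof -
  define c where "c = (a + b) / 2"
  have "2 * c ^ 4 = c ^ 4 + 4 * c ^ 3 * (a - c) + (c ^ 4 + 4 * c ^ 3 * (b - c))"
    by (simp add: c_def algebra_simps)
  also have "\<dots> \<le> a ^ 4 + b ^ 4"
    using power4_ge_tangent[of c a] power4_ge_tangent[of c b] by linarith
  finally show ?thesis
    by (simp add: c_def power_divide)
qed

lemma le_one_plus_power4: "x \<le> 1 + (x::real) ^ 4"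
proof (cases "x \<le> 1")
  case True
  moreover have "0 \<le> x ^ 4"
    by simp
  ultimately show ?thesis
    by linarith
next
  case False
  then have "x * 1 \<le> x * x ^ 3"
    by (intro mult_left_mono one_le_power) auto
  then show ?thesis
    by (simp add: power_numeral_reduce)
qed

lemma power4_le_exp: "0 \<le> t \<Longrightarrow> t ^ 4 \<le> 256 * exp (t::real)"
proof -
  assume "0 \<le> t"
  then have "(t / 4) ^ 4 \<le> (1 + t / real 4) ^ 4"
    by (intro power_mono) auto
  also have "\<dots> \<le> exp t"
    using \<open>0 \<le> t\<close> by (intro exp_ge_one_plus_x_over_n_power_n) auto
  finally show ?thesis
    by (simp add: power_divide)
qed

lemma norm_vec_power4_le: "norm (w :: real^'n) ^ 4 \<le> real CARD('n) * (\<Sum>i\<in>UNIV. (w $ i) ^ 4)"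
proof -
  have "norm w ^ 4 = (norm w ^ 2)\<^sup>2"
    by simp
  also have "\<dots> = (\<Sum>i\<in>UNIV. (w $ i)\<^sup>2)\<^sup>2"
    by (simp add: norm_vec_def L2_set_def sum_nonneg)
  also have "\<dots> \<le> (\<Sum>i\<in>UNIV. ((w $ i)\<^sup>2)\<^sup>2) * real CARD('n)"
    by (rule sum_squared_le_sum_of_squares)
  finally show ?thesis
    by (simp add: mult.commute flip: power_mult)
qed

lemma integral_weighted_power4_le:
  fixes k g :: "real \<Rightarrow> real"
  assumes k_nonneg: "\<And>s. s \<in> S \<Longrightarrow> 0 \<le> k s" and pos: "integral S k > 0"
    and k: "k integrable_on S" and kg: "(\<lambda>s. k s * g s) integrable_on S"
    and kg4: "(\<lambda>s. k s * g s ^ 4) integrable_on S"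
  shows "(integral S (\<lambda>s. k s * g s)) ^ 4 \<le> (integral S k) ^ 3 * integral S (\<lambda>s. k s * g s ^ 4)"
proof -
  define K m where "K = integral S k" and "m = integral S (\<lambda>s. k s * g s)"
  define c where "c = m / K"
  have tangent: "((\<lambda>s. (c ^ 4 - 4 * c ^ 4) * k s + 4 * c ^ 3 * (k s * g s))
      has_integral (c ^ 4 - 4 * c ^ 4) * K + 4 * c ^ 3 * m) S"
    unfolding K_def m_def
    by (intro has_integral_add has_integral_mult_right integrable_integral k kg)
  have "k s * (c ^ 4 + 4 * c ^ 3 * (g s - c)) \<le> k s * g s ^ 4" if "s \<in> S" for s
    using k_nonneg[OF that] power4_ge_tangent[of c "g s"] by (simp add: mult_left_mono)
  then have "(c ^ 4 - 4 * c ^ 4) * K + 4 * c ^ 3 * m \<le> integral S (\<lambda>s. k s * g s ^ 4)"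
    using has_integral_le[OF tangent integrable_integral[OF kg4]]
    by (simp add: algebra_simps power4_eq_xxxx power3_eq_cube)
  moreover have "(c ^ 4 - 4 * c ^ 4) * K + 4 * c ^ 3 * m = m ^ 4 / K ^ 3"
    using pos by (simp add: c_def K_def field_simps power4_eq_xxxx power3_eq_cube)
  ultimately have "m ^ 4 / K ^ 3 \<le> integral S (\<lambda>s. k s * g s ^ 4)"
    by simp
  then show ?thesis
    using pos unfolding K_def[symmetric] m_def[symmetric] by (simp add: pos_divide_le_eq mult.commute)
qed

lemma (in prob_space) expectation_power4_le:
  fixes g :: "'a \<Rightarrow> real"
  assumes g: "g \<in> borel_measurable M"
  shows "ennreal ((expectation g) ^ 4) \<le> (\<integral>\<^sup>+x. ennreal (g x ^ 4) \<partial>M)"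
proof (cases "(\<integral>\<^sup>+x. ennreal (g x ^ 4) \<partial>M) = \<infinity>")
  case False
  have g4: "integrable M (\<lambda>x. g x ^ 4)"
    using False g by (intro integrableI_bounded) (auto simp: top.not_eq_extremum)
  have "integrable M g"
  proof (rule Bochner_Integration.integrable_bound)
    show "integrable M (\<lambda>x. 1 + g x ^ 4)"
      using g4 by simp
    show "AE x in M. norm (g x) \<le> norm (1 + g x ^ 4)"
      using le_one_plus_power4[of "\<bar>g _\<bar>"] by (auto simp: power_abs)
  qed (rule g)
  define c where "c = expectation g"
  have "(\<integral>x. c ^ 4 + 4 * c ^ 3 * (g x - c) \<partial>M) \<le> (\<integral>x. g x ^ 4 \<partial>M)"
    using \<open>integrable M g\<close> g4 power4_ge_tangent by (intro integral_mono) auto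
  moreover have "(\<integral>x. c ^ 4 + 4 * c ^ 3 * (g x - c) \<partial>M) = c ^ 4"
    using \<open>integrable M g\<close> by (simp add: c_def prob_space)
  moreover have "(\<integral>\<^sup>+x. ennreal (g x ^ 4) \<partial>M) = ennreal (\<integral>x. g x ^ 4 \<partial>M)"
    using g4 by (intro nn_integral_eq_integral) auto
  ultimately show ?thesis
    by (simp add: c_def ennreal_leI)
qed simp

lemma gronwall_integral_le:
  fixes u r :: "real \<Rightarrow> real"
  assumes "0 \<le> L" "0 \<le> T"
    and u: "continuous_on {0..T} u" and r: "continuous_on {0..T} r"
    and r_nonneg: "\<And>s. s \<in> {0..T} \<Longrightarrow> 0 \<le> r s"
    and le: "\<And>s. s \<in> {0..T} \<Longrightarrow> u s \<le> r s + L * integral {0..s} u"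
  shows "u T \<le> r T + L * exp (L * T) * integral {0..T} r"
proof -
  define \<phi> where "\<phi> s = integral {0..s} u" for s
  have "((\<lambda>s. exp (- L * s) * \<phi> s) has_vector_derivative exp (- L * s) * (u s - L * \<phi> s))
      (at s within {0..T})" if "s \<in> {0..T}" for s
  proof -
    have "(\<phi> has_real_derivative u s) (at s within {0..T})"
      unfolding \<phi>_def has_real_derivative_iff_has_vector_derivative
      by (rule integral_has_vector_derivative[OF u that])
    then show ?thesis
      unfolding has_real_derivative_iff_has_vector_derivative[symmetric]
      by (auto intro!: derivative_eq_intros simp: algebra_simps)
  qed
  then have "((\<lambda>s. exp (- L * s) * (u s - L * \<phi> s)) has_integral
      exp (- L * T) * \<phi> T - exp (- L * 0) * \<phi> 0) {0..T}"
    by (intro fundamental_theorem_of_calculus \<open>0 \<le> T\<close>) auto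
  then have "((\<lambda>s. exp (- L * s) * (u s - L * \<phi> s)) has_integral exp (- L * T) * \<phi> T) {0..T}"
    by (simp add: \<phi>_def)
  moreover have "exp (- L * s) * (u s - L * \<phi> s) \<le> r s" if "s \<in> {0..T}" for s
  proof -
    have "exp (- L * s) * (u s - L * \<phi> s) \<le> exp (- L * s) * r s"
      using le[OF that] by (simp add: \<phi>_def)
    also have "\<dots> \<le> r s"
      using that \<open>0 \<le> L\<close> r_nonneg[OF that] by (intro mult_left_le_one_le) auto
    finally show ?thesis .
  qed
  ultimately have "exp (- L * T) * \<phi> T \<le> integral {0..T} r"
    using has_integral_le has_integral_integral integrable_continuous_interval[OF r] by blast
  then have "\<phi> T \<le> exp (L * T) * integral {0..T} r"
    by (simp add: exp_minus field_simps)
  then show ?thesis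
    using le[of T] \<open>0 \<le> L\<close> \<open>0 \<le> T\<close> mult_left_mono[of _ _ L] by (fastforce simp: \<phi>_def mult.assoc)
qed

lemma gronwall_power4:
  fixes u r :: "real \<Rightarrow> real"
  assumes "0 \<le> L" "0 \<le> t" and u: "continuous_on {0..t} u" and r: "continuous_on {0..t} r"
    and r_nonneg: "\<And>s. s \<in> {0..t} \<Longrightarrow> 0 \<le> r s" and "0 \<le> u t"
    and le: "\<And>s. s \<in> {0..t} \<Longrightarrow> u s \<le> r s + L * integral {0..s} u"
  shows "u t ^ 4 \<le> 8 * r t ^ 4 + 8 * L ^ 4 * exp (4 * L * t) * t ^ 3 * integral {0..t} (\<lambda>s. r s ^ 4)"
proof -
  have mean: "(integral {0..t} r) ^ 4 \<le> t ^ 3 * integral {0..t} (\<lambda>s. r s ^ 4)"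
  proof (cases "t = 0")
    case False
    then show ?thesis
      using integral_weighted_power4_le[of "{0..t}" "\<lambda>_. 1" r] r \<open>0 \<le> t\<close>
      by (simp add: integrable_continuous_interval continuous_intros)
  qed simp
  have "u t \<le> r t + L * exp (L * t) * integral {0..t} r"
    by (rule gronwall_integral_le[OF assms(1-5) le])
  then have "u t ^ 4 \<le> (r t + L * exp (L * t) * integral {0..t} r) ^ 4"
    using \<open>0 \<le> u t\<close> by (rule power_mono)
  also have "\<dots> \<le> 8 * (r t ^ 4 + (L * exp (L * t) * integral {0..t} r) ^ 4)"
    by (rule power4_add_le)
  also have "(L * exp (L * t) * integral {0..t} r) ^ 4 = L ^ 4 * exp (4 * L * t) * (integral {0..t} r) ^ 4"
    by (simp add: power_mult_distrib mult.assoc flip: exp_of_nat_mult)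
  also have "8 * (r t ^ 4 + L ^ 4 * exp (4 * L * t) * (integral {0..t} r) ^ 4)
      \<le> 8 * (r t ^ 4 + L ^ 4 * exp (4 * L * t) * (t ^ 3 * integral {0..t} (\<lambda>s. r s ^ 4)))"
    using mean by (intro mult_left_mono add_left_mono) auto
  finally show ?thesis
    by (simp add: algebra_simps)
qed

lemma nn_integral_interval_continuous:
  fixes g :: "real \<Rightarrow> real"
  assumes cg: "continuous_on {a..b} g" and g0: "\<And>u. u \<in> {a..b} \<Longrightarrow> 0 \<le> g u"
  shows "(\<integral>\<^sup>+u. ennreal (indicator {a..b} u * g u) \<partial>lborel) = ennreal (integral {a..b} g)"
proof -
  have m: "(\<lambda>u. indicator {a..b} u * g u) \<in> borel_measurable borel"
    using borel_measurable_continuous_on_indicator[OF _ cg] by simp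
  have eqf: "(\<lambda>u. indicator {a..b} u * g u) = (\<lambda>u. if u \<in> {a..b} then g u else 0)"
    by (auto simp: indicator_def)
  have "(g has_integral integral {a..b} g) {a..b}"
    using integrable_continuous_interval[OF cg] by (simp add: has_integral_integral)
  then have hi: "((\<lambda>u. indicator {a..b} u * g u) has_integral integral {a..b} g) UNIV"
    unfolding eqf by (subst has_integral_restrict_UNIV)
  have nn: "\<And>u. 0 \<le> indicator {a..b} u * g u"
    using g0 by (auto simp: indicator_def)
  show ?thesis
    using nn_integral_has_integral_lborel[OF m nn hi] by simp
qed


lemma (in prob_space) nn_integral_weighted_expectation_le:
  fixes g :: "real \<Rightarrow> 'a \<Rightarrow> real" and k :: "real \<Rightarrow> real"
  assumes g: "(\<lambda>z. g (fst z) (snd z)) \<in> borel_measurable (lborel \<Otimes>\<^sub>M M)"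
    and k: "continuous_on {0..t} k" and k_nonneg: "\<And>s. 0 \<le> k s"
    and bound: "\<And>s. s \<in> {0..t} \<Longrightarrow> (\<integral>\<^sup>+\<omega>. ennreal (g s \<omega>) \<partial>M) \<le> ennreal B"
  shows "(\<lambda>\<omega>. \<integral>\<^sup>+s. ennreal (indicator {0..t} s * k s * g s \<omega>) \<partial>lborel) \<in> borel_measurable M"
    and "(\<integral>\<^sup>+\<omega>. (\<integral>\<^sup>+s. ennreal (indicator {0..t} s * k s * g s \<omega>) \<partial>lborel) \<partial>M) \<le> ennreal (integral {0..t} k * B)"
proof -
  interpret pair_sigma_finite lborel M
    by unfold_locales
  have [measurable]: "(\<lambda>s. indicator {0..t} s * k s) \<in> borel_measurable lborel"
    using borel_measurable_continuous_on_indicator[OF _ k] by simp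
  have joint: "(\<lambda>(s, \<omega>). ennreal (indicator {0..t} s * k s * g s \<omega>)) \<in> borel_measurable (lborel \<Otimes>\<^sub>M M)"
    using g unfolding case_prod_beta' by measurable
  show "(\<lambda>\<omega>. \<integral>\<^sup>+s. ennreal (indicator {0..t} s * k s * g s \<omega>) \<partial>lborel) \<in> borel_measurable M"
    using measurable_compose[OF measurable_pair_swap' joint]
    by (intro lborel.borel_measurable_nn_integral) (simp add: case_prod_beta')
  have "(\<integral>\<^sup>+\<omega>. (\<integral>\<^sup>+s. ennreal (indicator {0..t} s * k s * g s \<omega>) \<partial>lborel) \<partial>M)
      = (\<integral>\<^sup>+s. (\<integral>\<^sup>+\<omega>. ennreal (indicator {0..t} s * k s * g s \<omega>) \<partial>M) \<partial>lborel)"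
    using Fubini'[OF joint] by simp
  also have "\<dots> \<le> (\<integral>\<^sup>+s. ennreal (indicator {0..t} s * k s) * ennreal B \<partial>lborel)"
  proof (intro nn_integral_mono)
    fix s :: real
    have "(\<integral>\<^sup>+\<omega>. ennreal (indicator {0..t} s * k s * g s \<omega>) \<partial>M)
        = ennreal (indicator {0..t} s * k s) * (\<integral>\<^sup>+\<omega>. ennreal (g s \<omega>) \<partial>M)"
      using k_nonneg measurable_compose[OF measurable_Pair1' g, of s]
      by (subst nn_integral_cmult[symmetric]) (auto simp: ennreal_mult' indicator_def)
    also have "\<dots> \<le> ennreal (indicator {0..t} s * k s) * ennreal B"
      using bound by (cases "s \<in> {0..t}") (auto intro: mult_left_mono)
    finally show "(\<integral>\<^sup>+\<omega>. ennreal (indicator {0..t} s * k s * g s \<omega>) \<partial>M) \<le> ennreal (indicator {0..t} s * k s) * ennreal B" .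
  qed
  also have "\<dots> = (\<integral>\<^sup>+s. ennreal (indicator {0..t} s * k s) \<partial>lborel) * ennreal B"
    by (rule nn_integral_multc) measurable
  also have "(\<integral>\<^sup>+s. ennreal (indicator {0..t} s * k s) \<partial>lborel) = ennreal (integral {0..t} k)"
    using k k_nonneg by (rule nn_integral_interval_continuous)
  also have "ennreal (integral {0..t} k) * ennreal B = ennreal (integral {0..t} k * B)"
    using integral_nonneg[OF integrable_continuous_interval[OF k] k_nonneg] by (simp add: ennreal_mult')
  finally show "(\<integral>\<^sup>+\<omega>. (\<integral>\<^sup>+s. ennreal (indicator {0..t} s * k s * g s \<omega>) \<partial>lborel) \<partial>M) \<le> ennreal (integral {0..t} k * B)" .
qed

section \<open>Exponential smoothing and variation of constants\<close>

definition exp_smoothing :: "real \<Rightarrow> (real \<Rightarrow> real) \<Rightarrow> real \<Rightarrow> real" where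
  "exp_smoothing \<epsilon> g s = integral {0..s} (\<lambda>u. exp (- (s - u) / \<epsilon>) * g u)"

lemma exp_kernel_split: "exp (- (t - s) / \<epsilon>) = exp (- t / \<epsilon>) * exp (s / (\<epsilon>::real))"
  by (simp add: mult_exp_exp diff_divide_distrib)

lemma integral_exp_kernel:
  fixes f :: "real \<Rightarrow> 'a::real_normed_vector"
  shows "integral {0..t} (\<lambda>s. exp (- (t - s) / \<epsilon>) *\<^sub>R f s)
     = exp (- t / \<epsilon>) *\<^sub>R integral {0..t} (\<lambda>s. exp (s / \<epsilon>) *\<^sub>R f s)"
  by (simp only: exp_kernel_split scaleR_scaleR[symmetric] integral_cmul)

lemma has_integral_exp_kernel:
  fixes \<epsilon> s :: real
  assumes "0 < \<epsilon>" "0 \<le> s"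
  shows "((\<lambda>u. exp (- (s - u) / \<epsilon>)) has_integral \<epsilon> - \<epsilon> * exp (- s / \<epsilon>)) {0..s}"
proof -
  have "((\<lambda>u. exp (- (s - u) / \<epsilon>)) has_integral
      \<epsilon> * exp (- (s - s) / \<epsilon>) - \<epsilon> * exp (- (s - 0) / \<epsilon>)) {0..s}"
  proof (rule fundamental_theorem_of_calculus[OF \<open>0 \<le> s\<close>])
    fix u
    have "((\<lambda>u. \<epsilon> * exp (- (s - u) / \<epsilon>)) has_real_derivative exp (- (s - u) / \<epsilon>)) (at u within {0..s})"
      using \<open>0 < \<epsilon>\<close> by (auto intro!: derivative_eq_intros)
    then show "((\<lambda>u. \<epsilon> * exp (- (s - u) / \<epsilon>)) has_vector_derivative exp (- (s - u) / \<epsilon>)) (at u within {0..s})"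
      by (simp add: has_real_derivative_iff_has_vector_derivative)
  qed
  then show ?thesis
    by simp
qed

lemma continuous_on_exp_smoothing:
  assumes "0 < \<epsilon>" "continuous_on {0..t} g"
  shows "continuous_on {0..t} (exp_smoothing \<epsilon> g)"
proof -
  have "continuous_on {0..t} (\<lambda>s. integral {0..s} (\<lambda>u. exp (u / \<epsilon>) * g u))"
    using assms by (auto intro!: indefinite_integral_continuous_1 integrable_continuous_interval continuous_intros)
  then have "continuous_on {0..t} (\<lambda>s. exp (- s / \<epsilon>) * integral {0..s} (\<lambda>u. exp (u / \<epsilon>) * g u))"
    using \<open>0 < \<epsilon>\<close> by (auto intro!: continuous_intros)
  then show ?thesis
    using integral_exp_kernel[of _ \<epsilon> g] by (simp add: exp_smoothing_def)
qed

lemma exp_smoothing_nonneg: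
  assumes "0 < \<epsilon>" "continuous_on {0..s} g" "\<And>u. u \<in> {0..s} \<Longrightarrow> 0 \<le> g u"
  shows "0 \<le> exp_smoothing \<epsilon> g s"
  unfolding exp_smoothing_def
  using assms by (intro integral_nonneg integrable_continuous_interval continuous_intros) auto

lemma norm_integral_exp_kernel_le:
  fixes W :: "real \<Rightarrow> 'a::euclidean_space"
  assumes "0 < \<epsilon>" "continuous_on {0..s} W"
  shows "norm (integral {0..s} (\<lambda>u. exp (- (s - u) / \<epsilon>) *\<^sub>R W u))
    \<le> exp_smoothing \<epsilon> (\<lambda>u. norm (W u)) s"
  unfolding exp_smoothing_def
  using assms by (intro integral_norm_bound_integral integrable_continuous_interval continuous_intros) auto

lemma exp_smoothing_power4_le:
  assumes "0 < \<epsilon>" "0 \<le> s" and g: "continuous_on {0..s} g"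
  shows "exp_smoothing \<epsilon> g s ^ 4 \<le> \<epsilon> ^ 3 * integral {0..s} (\<lambda>u. exp (- (s - u) / \<epsilon>) * g u ^ 4)"
proof (cases "s = 0")
  case False
  define k where "k u = exp (- (s - u) / \<epsilon>)" for u
  have k: "(k has_integral \<epsilon> - \<epsilon> * exp (- s / \<epsilon>)) {0..s}"
    unfolding k_def using has_integral_exp_kernel[OF assms(1,2)] .
  have mass: "0 < integral {0..s} k" "integral {0..s} k \<le> \<epsilon>"
    using integral_unique[OF k] \<open>0 < \<epsilon>\<close> \<open>0 \<le> s\<close> False by auto
  have ck: "continuous_on {0..s} k"
    unfolding k_def using \<open>0 < \<epsilon>\<close> by (intro continuous_intros) auto
  have k_nonneg: "0 \<le> k u" for u
    by (simp add: k_def)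
  have "exp_smoothing \<epsilon> g s ^ 4 \<le> (integral {0..s} k) ^ 3 * integral {0..s} (\<lambda>u. k u * g u ^ 4)"
    unfolding exp_smoothing_def k_def[symmetric]
    using ck g mass(1) k_nonneg
    by (intro integral_weighted_power4_le integrable_continuous_interval continuous_intros)
  also have "\<dots> \<le> \<epsilon> ^ 3 * integral {0..s} (\<lambda>u. k u * g u ^ 4)"
    using mass ck g k_nonneg
    by (intro mult_right_mono power_mono integral_nonneg integrable_continuous_interval continuous_intros)
      auto
  finally show ?thesis
    by (simp add: k_def)
qed (simp add: exp_smoothing_def)

lemma linear_relaxation_solution:
  fixes U f :: "real \<Rightarrow> 'a::banach"
  assumes "0 < \<epsilon>" and U: "continuous_on {0..T} U" and f: "continuous_on {0..T} f"
    and ode: "\<And>t. t \<in> {0..T} \<Longrightarrow> U t = U 0 + (1 / \<epsilon>) *\<^sub>R integral {0..t} (\<lambda>s. f s - U s)"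
    and t: "t \<in> {0..T}"
  shows "U t = exp (- t / \<epsilon>) *\<^sub>R U 0 + (1 / \<epsilon>) *\<^sub>R integral {0..t} (\<lambda>s. exp (- (t - s) / \<epsilon>) *\<^sub>R f s)"
proof -
  note scale = bounded_linear.has_vector_derivative[OF bounded_linear_scaleR_right]
  define \<Phi> where "\<Phi> t = exp (t / \<epsilon>) *\<^sub>R U t - (1 / \<epsilon>) *\<^sub>R integral {0..t} (\<lambda>s. exp (s / \<epsilon>) *\<^sub>R f s)" for t
  have "(\<Phi> has_derivative (\<lambda>h. 0)) (at s within {0..T})" if s: "s \<in> {0..T}" for s
  proof -
    have "((\<lambda>x. U 0 + (1 / \<epsilon>) *\<^sub>R integral {0..x} (\<lambda>s. f s - U s)) has_vector_derivative
        (1 / \<epsilon>) *\<^sub>R (f s - U s)) (at s within {0..T})"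
      using has_vector_derivative_add[OF has_vector_derivative_const
          scale[OF integral_has_vector_derivative[OF continuous_on_diff[OF f U] s]]] by simp
    then have "(U has_vector_derivative (1 / \<epsilon>) *\<^sub>R (f s - U s)) (at s within {0..T})"
      by (rule has_vector_derivative_transform[OF s ode, rotated])
    moreover have "((\<lambda>t. integral {0..t} (\<lambda>s. exp (s / \<epsilon>) *\<^sub>R f s)) has_vector_derivative
        exp (s / \<epsilon>) *\<^sub>R f s) (at s within {0..T})"
      using f s \<open>0 < \<epsilon>\<close> by (intro integral_has_vector_derivative continuous_intros) auto
    moreover have "((\<lambda>t. exp (t / \<epsilon>)) has_real_derivative exp (s / \<epsilon>) * (1 / \<epsilon>)) (at s within {0..T})"
      using \<open>0 < \<epsilon>\<close> by (auto intro!: derivative_eq_intros)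
    ultimately have "(\<Phi> has_vector_derivative exp (s / \<epsilon>) *\<^sub>R ((1 / \<epsilon>) *\<^sub>R (f s - U s))
        + (exp (s / \<epsilon>) * (1 / \<epsilon>)) *\<^sub>R U s - (1 / \<epsilon>) *\<^sub>R (exp (s / \<epsilon>) *\<^sub>R f s)) (at s within {0..T})"
      unfolding \<Phi>_def by (intro has_vector_derivative_diff has_vector_derivative_scaleR scale)
    then show ?thesis
      by (simp add: has_vector_derivative_def algebra_simps)
  qed
  then have "\<Phi> t = \<Phi> 0"
    using t by (intro has_derivative_zero_unique[of "{0..T}" \<Phi>]) auto
  then have "exp (- t / \<epsilon>) *\<^sub>R (exp (t / \<epsilon>) *\<^sub>R U t)
      = exp (- t / \<epsilon>) *\<^sub>R (U 0 + (1 / \<epsilon>) *\<^sub>R integral {0..t} (\<lambda>s. exp (s / \<epsilon>) *\<^sub>R f s))"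
    by (simp add: \<Phi>_def algebra_simps)
  then show ?thesis
    unfolding integral_exp_kernel by (simp add: scaleR_add_right mult_exp_exp)
qed

lemma langevin_position_formula:
  fixes V W \<beta> :: "real \<Rightarrow> 'a::banach"
  assumes "0 < \<epsilon>" "0 \<le> T"
    and V: "continuous_on {0..T} V" and W: "continuous_on {0..T} W" and \<beta>: "continuous_on {0..T} \<beta>"
    and ode: "\<And>t. t \<in> {0..T} \<Longrightarrow> V t = V 0 + (1 / \<epsilon>) *\<^sub>R integral {0..t} (\<lambda>s. \<beta> s - V s) + c *\<^sub>R W t"
  shows "integral {0..T} V = (\<epsilon> * (1 - exp (- T / \<epsilon>))) *\<^sub>R V 0
     + integral {0..T} (\<lambda>s. (1 - exp (- (T - s) / \<epsilon>)) *\<^sub>R \<beta> s)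
     + c *\<^sub>R integral {0..T} (\<lambda>s. exp (- (T - s) / \<epsilon>) *\<^sub>R W s)"
proof -
  (* U = V - c W solves the noise-free relaxation equation driven by f = beta - c W. *)
  define U where "U t = V t - c *\<^sub>R W t" for t
  define f where "f s = \<beta> s - c *\<^sub>R W s" for s
  define k where "k s = exp (- (T - s) / \<epsilon>)" for s
  have int: "g integrable_on {0..T}" if "continuous_on {0..T} g" for g :: "real \<Rightarrow> 'a"
    using that by (rule integrable_continuous_interval)
  have k: "continuous_on {0..T} k"
    unfolding k_def using \<open>0 < \<epsilon>\<close> by (intro continuous_intros) auto
  have U: "continuous_on {0..T} U" and f: "continuous_on {0..T} f"
    unfolding U_def f_def using V W \<beta> by (auto intro!: continuous_intros)
  have "U 0 = V 0"
    using ode[of 0] \<open>0 \<le> T\<close> by (simp add: U_def)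
  have fU: "f s - U s = \<beta> s - V s" for s
    by (simp add: U_def f_def)
  have ode_U: "U t = U 0 + (1 / \<epsilon>) *\<^sub>R integral {0..t} (\<lambda>s. f s - U s)" if "t \<in> {0..T}" for t
    unfolding fU \<open>U 0 = V 0\<close> using ode[OF that] by (simp add: U_def)
  have UT: "\<epsilon> *\<^sub>R U T = (\<epsilon> * exp (- T / \<epsilon>)) *\<^sub>R V 0 + integral {0..T} (\<lambda>s. k s *\<^sub>R f s)"
    using linear_relaxation_solution[OF \<open>0 < \<epsilon>\<close> U f ode_U, of T] \<open>0 \<le> T\<close> \<open>0 < \<epsilon>\<close> \<open>U 0 = V 0\<close>
    by (simp add: k_def scaleR_add_right)
  have "U T = V 0 + (1 / \<epsilon>) *\<^sub>R (integral {0..T} f - integral {0..T} U)"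
    using ode_U[of T] \<open>0 \<le> T\<close> \<open>U 0 = V 0\<close> integral_diff[OF int[OF f] int[OF U]] by simp
  then have "\<epsilon> *\<^sub>R U T = \<epsilon> *\<^sub>R V 0 + (integral {0..T} f - integral {0..T} U)"
    using \<open>0 < \<epsilon>\<close> by (simp add: scaleR_add_right)
  then have IU: "integral {0..T} U = integral {0..T} f - \<epsilon> *\<^sub>R U T + \<epsilon> *\<^sub>R V 0"
    by (simp add: algebra_simps)
  have "integral {0..T} V = integral {0..T} U + c *\<^sub>R integral {0..T} W"
    using integral_add[OF int[OF U] int[OF continuous_on_scaleR[OF continuous_on_const W]], of c]
    by (simp add: U_def)
  also have "\<dots> = integral {0..T} f - integral {0..T} (\<lambda>s. k s *\<^sub>R f s)
      + (\<epsilon> * (1 - exp (- T / \<epsilon>))) *\<^sub>R V 0 + c *\<^sub>R integral {0..T} W"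
    unfolding IU UT by (simp add: algebra_simps)
  also have "integral {0..T} f - integral {0..T} (\<lambda>s. k s *\<^sub>R f s)
      = integral {0..T} (\<lambda>s. (1 - k s) *\<^sub>R \<beta> s) - c *\<^sub>R integral {0..T} W
        + c *\<^sub>R integral {0..T} (\<lambda>s. k s *\<^sub>R W s)"
  proof -
    have "integral {0..T} (\<lambda>s. k s *\<^sub>R c *\<^sub>R W s) = c *\<^sub>R integral {0..T} (\<lambda>s. k s *\<^sub>R W s)"
      by (simp add: mult.commute flip: integral_cmul)
    then show ?thesis
      unfolding f_def using k \<beta> W
      by (simp add: scaleR_diff_right scaleR_diff_left integral_diff int continuous_intros algebra_simps)
  qed
  finally show ?thesis
    by (simp add: k_def algebra_simps)
qed

(* The variation-of-constants form of the Langevin system, with the velocity eliminated. *)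
definition langevin_mild ::
  "real \<Rightarrow> ('a::real_normed_vector \<Rightarrow> real \<Rightarrow> 'a) \<Rightarrow> 'a \<Rightarrow> 'a \<Rightarrow> (real \<Rightarrow> 'a) \<Rightarrow> (real \<Rightarrow> 'a) \<Rightarrow> bool" where
  "langevin_mild \<epsilon> b x v W X \<longleftrightarrow> continuous_on {0..} X \<and>
     (\<forall>s\<ge>0. X s = x + (\<epsilon> * (1 - exp (- s / \<epsilon>))) *\<^sub>R v
        + integral {0..s} (\<lambda>u. (1 - exp (- (s - u) / \<epsilon>)) *\<^sub>R b (X u) u)
        + sqrt (2 / \<epsilon>) *\<^sub>R integral {0..s} (\<lambda>u. exp (- (s - u) / \<epsilon>) *\<^sub>R W u))"

section \<open>Pathwise comparison of two solutions\<close>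

definition perturbation_size :: "real \<Rightarrow> real \<Rightarrow> 'a::real_normed_vector \<Rightarrow> (real \<Rightarrow> 'a) \<Rightarrow> real \<Rightarrow> real" where
  "perturbation_size \<epsilon> c v W s = \<epsilon> * norm v + c * exp_smoothing \<epsilon> (\<lambda>u. norm (W u)) s"

lemma perturbation_size_nonneg:
  assumes "0 < \<epsilon>" "0 \<le> c" "continuous_on {0..s} W"
  shows "0 \<le> perturbation_size \<epsilon> c v W s"
  unfolding perturbation_size_def
  using assms by (intro add_nonneg_nonneg mult_nonneg_nonneg exp_smoothing_nonneg continuous_intros) auto

lemma continuous_on_perturbation_size:
  assumes "0 < \<epsilon>" "continuous_on {0..t} W"
  shows "continuous_on {0..t} (perturbation_size \<epsilon> c v W)"
  unfolding perturbation_size_def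
  using assms by (intro continuous_intros continuous_on_exp_smoothing) auto

lemma continuous_on_compose_path:
  assumes "continuous_on (UNIV \<times> {0..}) (\<lambda>(y, s). b y s)" "continuous_on {0..t} X"
  shows "continuous_on {0..t} (\<lambda>s. b (X s) s)"
proof -
  have "continuous_on {0..t} (\<lambda>s. (X s, s))"
    using assms(2) by (intro continuous_intros)
  then show ?thesis
    using continuous_on_compose2[OF assms(1)] by fastforce
qed

context
  fixes b :: "'a::euclidean_space \<Rightarrow> real \<Rightarrow> 'a" and \<epsilon> c L t :: real and x w va vb :: 'a
    and Xa Xb Wa Wb :: "real \<Rightarrow> 'a"
  assumes \<epsilon>: "0 < \<epsilon>" and c: "0 \<le> c" and L: "0 \<le> L"
    and lip: "\<And>y1 y2 s. 0 \<le> s \<Longrightarrow> norm (b y1 s - b y2 s) \<le> L * norm (y1 - y2)"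
    and Xa_cont: "continuous_on {0..t} Xa" and Xb_cont: "continuous_on {0..t} Xb"
    and Wa_cont: "continuous_on {0..t} Wa" and Wb_cont: "continuous_on {0..t} Wb"
    and ba_cont: "continuous_on {0..t} (\<lambda>s. b (Xa s) s)" and bb_cont: "continuous_on {0..t} (\<lambda>s. b (Xb s) s)"
    and Xa: "\<And>s. s \<in> {0..t} \<Longrightarrow> Xa s = x + (\<epsilon> * (1 - exp (- s / \<epsilon>))) *\<^sub>R va
       + integral {0..s} (\<lambda>u. (1 - exp (- (s - u) / \<epsilon>)) *\<^sub>R b (Xa u) u)
       + c *\<^sub>R integral {0..s} (\<lambda>u. exp (- (s - u) / \<epsilon>) *\<^sub>R Wa u)"
    and Xb: "\<And>s. s \<in> {0..t} \<Longrightarrow> Xb s = x + (\<epsilon> * (1 - exp (- s / \<epsilon>))) *\<^sub>R vb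
       + integral {0..s} (\<lambda>u. (1 - exp (- (s - u) / \<epsilon>)) *\<^sub>R b (Xb u) u)
       + c *\<^sub>R integral {0..s} (\<lambda>u. exp (- (s - u) / \<epsilon>) *\<^sub>R Wb u)"
begin

lemma langevin_drift_diff_le:
  assumes s: "s \<in> {0..t}"
  shows "norm (integral {0..s} (\<lambda>u. (1 - exp (- (s - u) / \<epsilon>)) *\<^sub>R (b (Xa u) u - b (Xb u) u)))
    \<le> L * integral {0..s} (\<lambda>u. norm (Xa u - Xb u))"
proof -
  have sub: "{0..s} \<subseteq> {0..t}"
    using s by auto
  have "norm ((1 - exp (- (s - u) / \<epsilon>)) *\<^sub>R (b (Xa u) u - b (Xb u) u)) \<le> L * norm (Xa u - Xb u)"
    if "u \<in> {0..s}" for u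
  proof -
    have "\<bar>1 - exp (- (s - u) / \<epsilon>)\<bar> \<le> 1"
      using that \<epsilon> by (auto simp: divide_nonpos_pos)
    then show ?thesis
      using lip[of u "Xa u" "Xb u"] that by (auto intro: order_trans[OF mult_left_le_one_le])
  qed
  then have "norm (integral {0..s} (\<lambda>u. (1 - exp (- (s - u) / \<epsilon>)) *\<^sub>R (b (Xa u) u - b (Xb u) u)))
      \<le> integral {0..s} (\<lambda>u. L * norm (Xa u - Xb u))"
    using \<epsilon> continuous_on_subset[OF ba_cont sub] continuous_on_subset[OF bb_cont sub]
      continuous_on_subset[OF Xa_cont sub] continuous_on_subset[OF Xb_cont sub]
    by (intro integral_norm_bound_integral integrable_continuous_interval continuous_intros) auto
  then show ?thesis
    by simp
qed

lemma langevin_paths_diff_le: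
  assumes s: "s \<in> {0..t}"
  shows "norm (Xa s - Xb s) \<le> perturbation_size \<epsilon> c (va - w) Wa s + perturbation_size \<epsilon> c (vb - w) Wb s
    + L * integral {0..s} (\<lambda>u. norm (Xa u - Xb u))"
proof -
  define k where "k u = exp (- (s - u) / \<epsilon>)" for u
  define e where "e = \<epsilon> * (1 - exp (- s / \<epsilon>))"
  have sub: "{0..s} \<subseteq> {0..t}"
    using s by auto
  note on_s = continuous_on_subset[OF _ sub]
  have k: "continuous_on {0..s} k"
    unfolding k_def using \<epsilon> by (intro continuous_intros) auto
  have int: "g integrable_on {0..s}" if "continuous_on {0..s} g" for g :: "real \<Rightarrow> 'a"
    using that by (rule integrable_continuous_interval)
  have drift: "integral {0..s} (\<lambda>u. (1 - k u) *\<^sub>R b (Xa u) u) - integral {0..s} (\<lambda>u. (1 - k u) *\<^sub>R b (Xb u) u)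
      = integral {0..s} (\<lambda>u. (1 - k u) *\<^sub>R (b (Xa u) u - b (Xb u) u))"
    using k on_s[OF ba_cont] on_s[OF bb_cont]
    by (simp add: scaleR_diff_right integral_diff int continuous_intros)
  have "Xa s - Xb s = e *\<^sub>R (va - vb)
      + integral {0..s} (\<lambda>u. (1 - k u) *\<^sub>R (b (Xa u) u - b (Xb u) u))
      + c *\<^sub>R (integral {0..s} (\<lambda>u. k u *\<^sub>R Wa u) - integral {0..s} (\<lambda>u. k u *\<^sub>R Wb u))"
    unfolding drift[symmetric] unfolding Xa[OF s] Xb[OF s] k_def e_def by (simp add: algebra_simps)
  also have "norm \<dots> \<le> \<epsilon> * (norm (va - w) + norm (vb - w)) + L * integral {0..s} (\<lambda>u. norm (Xa u - Xb u))
      + c * (exp_smoothing \<epsilon> (\<lambda>u. norm (Wa u)) s + exp_smoothing \<epsilon> (\<lambda>u. norm (Wb u)) s)"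
  proof (intro norm_triangle_le add_mono)
    have "norm (va - vb) \<le> norm (va - w) + norm (vb - w)"
      using norm_triangle_ineq4[of "va - w" "vb - w"] by simp
    moreover have "0 \<le> e" "e \<le> \<epsilon>"
      using \<epsilon> s by (auto simp: e_def)
    ultimately show "norm (e *\<^sub>R (va - vb)) \<le> \<epsilon> * (norm (va - w) + norm (vb - w))"
      by (simp add: mult_mono)
    show "norm (integral {0..s} (\<lambda>u. (1 - k u) *\<^sub>R (b (Xa u) u - b (Xb u) u)))
        \<le> L * integral {0..s} (\<lambda>u. norm (Xa u - Xb u))"
      unfolding k_def by (rule langevin_drift_diff_le[OF s])
    have "norm (integral {0..s} (\<lambda>u. k u *\<^sub>R Wa u) - integral {0..s} (\<lambda>u. k u *\<^sub>R Wb u))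
        \<le> exp_smoothing \<epsilon> (\<lambda>u. norm (Wa u)) s + exp_smoothing \<epsilon> (\<lambda>u. norm (Wb u)) s"
      unfolding k_def using \<epsilon> on_s[OF Wa_cont] on_s[OF Wb_cont]
      by (intro norm_triangle_le_diff add_mono norm_integral_exp_kernel_le)
    then show "norm (c *\<^sub>R (integral {0..s} (\<lambda>u. k u *\<^sub>R Wa u) - integral {0..s} (\<lambda>u. k u *\<^sub>R Wb u)))
        \<le> c * (exp_smoothing \<epsilon> (\<lambda>u. norm (Wa u)) s + exp_smoothing \<epsilon> (\<lambda>u. norm (Wb u)) s)"
      using c by (simp add: mult_left_mono)
  qed
  finally show ?thesis
    by (simp add: perturbation_size_def algebra_simps)
qed

lemma langevin_paths_diff_power4_le:
  assumes "0 \<le> t"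
  shows "norm (Xa t - Xb t) ^ 4 \<le> 64 * (perturbation_size \<epsilon> c (va - w) Wa t ^ 4 + perturbation_size \<epsilon> c (vb - w) Wb t ^ 4)
    + 64 * L ^ 4 * exp (4 * L * t) * t ^ 3
      * integral {0..t} (\<lambda>s. perturbation_size \<epsilon> c (va - w) Wa s ^ 4 + perturbation_size \<epsilon> c (vb - w) Wb s ^ 4)"
proof -
  define Pa Pb where "Pa = perturbation_size \<epsilon> c (va - w) Wa" and "Pb = perturbation_size \<epsilon> c (vb - w) Wb"
  have P_cont: "continuous_on {0..t} Pa" "continuous_on {0..t} Pb"
    unfolding Pa_def Pb_def using \<epsilon> Wa_cont Wb_cont by (auto intro!: continuous_on_perturbation_size)
  have P_nonneg: "0 \<le> Pa s" "0 \<le> Pb s" if "s \<in> {0..t}" for s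
    unfolding Pa_def Pb_def using \<epsilon> c that Wa_cont Wb_cont
    by (auto intro!: perturbation_size_nonneg elim!: continuous_on_subset)
  have "integral {0..t} (\<lambda>s. (Pa s + Pb s) ^ 4) \<le> integral {0..t} (\<lambda>s. 8 * (Pa s ^ 4 + Pb s ^ 4))"
    using P_cont
    by (intro integral_le integrable_continuous_interval continuous_intros power4_add_le) auto
  then have sum_bound: "integral {0..t} (\<lambda>s. (Pa s + Pb s) ^ 4) \<le> 8 * integral {0..t} (\<lambda>s. Pa s ^ 4 + Pb s ^ 4)"
    by (simp only: integral_mult_right)
  have "norm (Xa t - Xb t) ^ 4 \<le> 8 * (Pa t + Pb t) ^ 4
      + 8 * L ^ 4 * exp (4 * L * t) * t ^ 3 * integral {0..t} (\<lambda>s. (Pa s + Pb s) ^ 4)"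
    using \<open>0 \<le> t\<close> L Xa_cont Xb_cont P_cont P_nonneg langevin_paths_diff_le
    by (intro gronwall_power4) (auto simp: Pa_def Pb_def intro!: continuous_intros)
  also have "\<dots> \<le> 8 * (8 * (Pa t ^ 4 + Pb t ^ 4))
      + 8 * L ^ 4 * exp (4 * L * t) * t ^ 3 * (8 * integral {0..t} (\<lambda>s. Pa s ^ 4 + Pb s ^ 4))"
    using \<open>0 \<le> t\<close> sum_bound by (intro add_mono mult_left_mono power4_add_le) auto
  finally show ?thesis
    by (simp add: Pa_def Pb_def algebra_simps)
qed

end

(* The contribution of a single path to the bound of langevin_paths_diff_power4_le. *)
definition perturbation_energy :: "real \<Rightarrow> real \<Rightarrow> (real \<Rightarrow> real) \<Rightarrow> ennreal" where
  "perturbation_energy \<kappa> t P =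
     ennreal (64 * P t ^ 4) + ennreal \<kappa> * (\<integral>\<^sup>+s. ennreal (indicator {0..t} s * P s ^ 4) \<partial>lborel)"

lemma perturbation_energy_eq:
  assumes "0 \<le> \<kappa>" and P: "continuous_on {0..t} P" "\<And>s. s \<in> {0..t} \<Longrightarrow> 0 \<le> P s"
  shows "perturbation_energy \<kappa> t P = ennreal (64 * P t ^ 4 + \<kappa> * integral {0..t} (\<lambda>s. P s ^ 4))"
proof -
  have I: "(\<integral>\<^sup>+s. ennreal (indicator {0..t} s * P s ^ 4) \<partial>lborel) = ennreal (integral {0..t} (\<lambda>s. P s ^ 4))"
    using P by (intro nn_integral_interval_continuous continuous_intros) auto
  have "0 \<le> integral {0..t} (\<lambda>s. P s ^ 4)"
    using P by (intro integral_nonneg integrable_continuous_interval continuous_intros) auto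
  then show ?thesis
    unfolding perturbation_energy_def I using \<open>0 \<le> \<kappa>\<close> by (simp add: ennreal_plus ennreal_mult')
qed

lemma langevin_mild_diff_power4_le:
  fixes b :: "'a::euclidean_space \<Rightarrow> real \<Rightarrow> 'a" and w :: 'a
  assumes \<epsilon>: "0 < \<epsilon>" and L: "0 \<le> L" and "0 \<le> t"
    and lip: "\<And>y1 y2 s. 0 \<le> s \<Longrightarrow> norm (b y1 s - b y2 s) \<le> L * norm (y1 - y2)"
    and b: "continuous_on (UNIV \<times> {0..}) (\<lambda>(y, s). b y s)"
    and Xa: "langevin_mild \<epsilon> b x va Wa Xa" and Wa: "continuous_on {0..t} Wa"
    and Xb: "langevin_mild \<epsilon> b x vb Wb Xb" and Wb: "continuous_on {0..t} Wb"
  defines "\<kappa> \<equiv> 64 * L ^ 4 * exp (4 * L * t) * t ^ 3"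
  shows "ennreal (norm (Xa t - Xb t) ^ 4)
    \<le> perturbation_energy \<kappa> t (perturbation_size \<epsilon> (sqrt (2 / \<epsilon>)) (va - w) Wa)
      + perturbation_energy \<kappa> t (perturbation_size \<epsilon> (sqrt (2 / \<epsilon>)) (vb - w) Wb)"
proof -
  define Pa Pb where "Pa = perturbation_size \<epsilon> (sqrt (2 / \<epsilon>)) (va - w) Wa"
    and "Pb = perturbation_size \<epsilon> (sqrt (2 / \<epsilon>)) (vb - w) Wb"
  have P_cont: "continuous_on {0..t} Pa" "continuous_on {0..t} Pb"
    unfolding Pa_def Pb_def using \<epsilon> Wa Wb by (auto intro!: continuous_on_perturbation_size)
  have P_nonneg: "0 \<le> Pa s" "0 \<le> Pb s" if "s \<in> {0..t}" for s
    unfolding Pa_def Pb_def using \<epsilon> that Wa Wb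
    by (auto intro!: perturbation_size_nonneg elim!: continuous_on_subset)
  have "0 \<le> \<kappa>"
    using L \<open>0 \<le> t\<close> by (simp add: \<kappa>_def)
  have Xa_cont: "continuous_on {0..t} Xa" and Xb_cont: "continuous_on {0..t} Xb"
    using Xa Xb unfolding langevin_mild_def by (auto elim: continuous_on_subset)
  have "norm (Xa t - Xb t) ^ 4 \<le> 64 * (Pa t ^ 4 + Pb t ^ 4) + \<kappa> * integral {0..t} (\<lambda>s. Pa s ^ 4 + Pb s ^ 4)"
    unfolding Pa_def Pb_def \<kappa>_def
    using \<epsilon> L Xa_cont Xb_cont Wa Wb Xa Xb \<open>0 \<le> t\<close> continuous_on_compose_path[OF b]
    by (intro langevin_paths_diff_power4_le[OF \<epsilon> _ L lip]) (auto simp: langevin_mild_def)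
  also have "\<dots> = (64 * Pa t ^ 4 + \<kappa> * integral {0..t} (\<lambda>s. Pa s ^ 4))
      + (64 * Pb t ^ 4 + \<kappa> * integral {0..t} (\<lambda>s. Pb s ^ 4))"
    using P_cont
    by (subst integral_add) (auto intro!: integrable_continuous_interval continuous_intros simp: algebra_simps)
  finally have "ennreal (norm (Xa t - Xb t) ^ 4) \<le> ennreal ((64 * Pa t ^ 4 + \<kappa> * integral {0..t} (\<lambda>s. Pa s ^ 4))
      + (64 * Pb t ^ 4 + \<kappa> * integral {0..t} (\<lambda>s. Pb s ^ 4)))"
    by (rule ennreal_leI)
  also have "\<dots> = ennreal (64 * Pa t ^ 4 + \<kappa> * integral {0..t} (\<lambda>s. Pa s ^ 4))
      + ennreal (64 * Pb t ^ 4 + \<kappa> * integral {0..t} (\<lambda>s. Pb s ^ 4))"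
    using \<open>0 \<le> \<kappa>\<close> P_cont P_nonneg by (intro ennreal_plus add_nonneg_nonneg mult_nonneg_nonneg integral_nonneg
        integrable_continuous_interval continuous_intros) auto
  also have "\<dots> = perturbation_energy \<kappa> t Pa + perturbation_energy \<kappa> t Pb"
    using perturbation_energy_eq[OF \<open>0 \<le> \<kappa>\<close> P_cont(1) P_nonneg(1)]
      perturbation_energy_eq[OF \<open>0 \<le> \<kappa>\<close> P_cont(2) P_nonneg(2)] by simp
  finally show ?thesis
    unfolding Pa_def Pb_def .
qed

section \<open>Brownian motion and smoothed noise\<close>

lemma floor_mult_div_LIMSEQ:
  fixes s :: real
  shows "(\<lambda>k. real_of_int \<lfloor>real (Suc k) * s\<rfloor> / real (Suc k)) \<longlonglongrightarrow> s"
proof (rule tendsto_sandwich[of "\<lambda>k. s - inverse (real (Suc k))" _ _ "\<lambda>k. s"])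
  show "\<forall>\<^sub>F k in sequentially. s - inverse (real (Suc k)) \<le> real_of_int \<lfloor>real (Suc k) * s\<rfloor> / real (Suc k)"
  proof (intro always_eventually allI)
    fix k
    have n: "real (Suc k) > 0" by simp
    have "real (Suc k) * s - 1 \<le> real_of_int \<lfloor>real (Suc k) * s\<rfloor>" by linarith
    then have "(real (Suc k) * s - 1) / real (Suc k) \<le> real_of_int \<lfloor>real (Suc k) * s\<rfloor> / real (Suc k)"
      using n by (intro divide_right_mono) auto
    moreover have "(real (Suc k) * s - 1) / real (Suc k) = s - inverse (real (Suc k))"
      using n by (simp add: field_simps)
    ultimately show "s - inverse (real (Suc k)) \<le> real_of_int \<lfloor>real (Suc k) * s\<rfloor> / real (Suc k)"
      by simp
  qed
  show "\<forall>\<^sub>F k in sequentially. real_of_int \<lfloor>real (Suc k) * s\<rfloor> / real (Suc k) \<le> s"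
  proof (intro always_eventually allI)
    fix k
    have n: "real (Suc k) > 0" by simp
    have "real_of_int \<lfloor>real (Suc k) * s\<rfloor> \<le> real (Suc k) * s" by linarith
    then show "real_of_int \<lfloor>real (Suc k) * s\<rfloor> / real (Suc k) \<le> s"
      using n by (simp add: field_simps)
  qed
  show "(\<lambda>k. s - inverse (real (Suc k))) \<longlonglongrightarrow> s"
    using tendsto_diff[OF tendsto_const LIMSEQ_inverse_real_of_nat, of s] by simp
qed simp

(* The process is only given for s >= 0; it is frozen at time 0 for negative s. *)
lemma measurable_continuous_process:
  fixes f :: "real \<Rightarrow> 'w \<Rightarrow> 'b::metric_space"
  assumes meas: "\<And>s. s \<ge> 0 \<Longrightarrow> f s \<in> borel_measurable M"
    and cont: "\<And>\<omega>. \<omega> \<in> space M \<Longrightarrow> continuous_on {0..} (\<lambda>s. f s \<omega>)"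
  shows "(\<lambda>z. f (max (fst z) 0) (snd z)) \<in> borel_measurable (lborel \<Otimes>\<^sub>M M)"
proof (rule borel_measurable_LIMSEQ_metric)
  define g where "g k (z::real \<times> 'w) = f (max (real_of_int \<lfloor>real (Suc k) * max (fst z) 0\<rfloor> / real (Suc k)) 0) (snd z)" for k z
  show "(\<lambda>z. g k z) \<in> borel_measurable (lborel \<Otimes>\<^sub>M M)" for k
  proof -
    have "(\<lambda>z. (\<lambda>(i::int) z. f (max (real_of_int i / real (Suc k)) 0) (snd z)) (\<lfloor>real (Suc k) * max (fst z) 0\<rfloor>) z)
        \<in> borel_measurable (lborel \<Otimes>\<^sub>M M)"
    proof (rule measurable_compose_countable[where f="\<lambda>i z. f (max (real_of_int i / real (Suc k)) 0) (snd z)"])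
      fix i :: int
      show "(\<lambda>z. f (max (real_of_int i / real (Suc k)) 0) (snd z)) \<in> borel_measurable (lborel \<Otimes>\<^sub>M M)"
        using measurable_compose[OF measurable_snd meas[of "max (real_of_int i / real (Suc k)) 0"]] by simp
    next
      show "(\<lambda>z. \<lfloor>real (Suc k) * max (fst z) 0\<rfloor>) \<in> measurable (lborel \<Otimes>\<^sub>M M) (count_space UNIV)"
        by measurable
    qed
    then show ?thesis unfolding g_def by simp
  qed
  fix z :: "real \<times> 'w" assume z: "z \<in> space (lborel \<Otimes>\<^sub>M M)"
  then have \<omega>: "snd z \<in> space M" by (auto simp: space_pair_measure)
  let ?s = "max (fst z) 0"
  have lim: "(\<lambda>k. max (real_of_int \<lfloor>real (Suc k) * ?s\<rfloor> / real (Suc k)) 0) \<longlonglongrightarrow> max ?s 0"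
    by (intro tendsto_max floor_mult_div_LIMSEQ tendsto_const)
  have "(\<lambda>k. f (max (real_of_int \<lfloor>real (Suc k) * ?s\<rfloor> / real (Suc k)) 0) (snd z)) \<longlonglongrightarrow> f (max ?s 0) (snd z)"
    by (rule continuous_on_tendsto_compose[OF cont[OF \<omega>] lim]) auto
  then show "(\<lambda>k. g k z) \<longlonglongrightarrow> f (max (fst z) 0) (snd z)" unfolding g_def by simp
qed

lemma is_BM1_measurable: "is_BM1 M B \<Longrightarrow> 0 \<le> t \<Longrightarrow> B t \<in> borel_measurable M"
  by (simp add: is_BM1_def)

lemma is_BM1_continuous: "is_BM1 M B \<Longrightarrow> \<omega> \<in> space M \<Longrightarrow> continuous_on {0..} (\<lambda>t. B t \<omega>)"
  by (simp add: is_BM1_def)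

lemma is_BM1_zero: "is_BM1 M B \<Longrightarrow> \<omega> \<in> space M \<Longrightarrow> B 0 \<omega> = 0"
  by (simp add: is_BM1_def)

lemma is_BM1_increment:
  "is_BM1 M B \<Longrightarrow> 0 \<le> s \<Longrightarrow> s < t \<Longrightarrow>
    distributed M lborel (\<lambda>\<omega>. B t \<omega> - B s \<omega>) (\<lambda>y. ennreal (normal_density 0 (sqrt (t - s)) y))"
  by (simp add: is_BM1_def)

lemma is_std_BM_component: "is_std_BM M W \<Longrightarrow> is_BM1 M (\<lambda>t \<omega>. W t \<omega> $ i)"
  by (simp add: is_std_BM_def)

lemma is_std_BM_continuous:
  assumes "is_std_BM M W" "\<omega> \<in> space M"
  shows "continuous_on {0..} (\<lambda>t. W t \<omega>)"
proof -
  have "continuous_on {0..} (\<lambda>t. \<chi> i. W t \<omega> $ i)"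
    using is_BM1_continuous[OF is_std_BM_component[OF assms(1)] assms(2)]
    by (intro continuous_on_vec_lambda)
  then show ?thesis
    by simp
qed

lemma is_std_BM_continuous_on_interval:
  "is_std_BM M W \<Longrightarrow> \<omega> \<in> space M \<Longrightarrow> continuous_on {0..t} (\<lambda>s. W s \<omega>)"
  by (rule continuous_on_subset[OF is_std_BM_continuous]) auto

lemma is_std_BM_norm_measurable:
  assumes "is_std_BM M W" "0 \<le> t"
  shows "(\<lambda>\<omega>. norm (W t \<omega>)) \<in> borel_measurable M"
proof -
  have [measurable]: "(\<lambda>\<omega>. W t \<omega> $ i) \<in> borel_measurable M" for i
    using is_std_BM_component[OF assms(1)] assms(2) by (rule is_BM1_measurable)
  have "(\<lambda>\<omega>. sqrt (\<Sum>i\<in>UNIV. (W t \<omega> $ i)\<^sup>2)) \<in> borel_measurable M"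
    by measurable
  then show ?thesis
    by (simp add: norm_vec_def L2_set_def)
qed

lemma is_std_BM_norm_jointly_measurable:
  assumes W: "is_std_BM M W"
  shows "(\<lambda>z. norm (W (max (fst z) 0) (snd z))) \<in> borel_measurable (lborel \<Otimes>\<^sub>M M)"
  using is_std_BM_norm_measurable[OF W] is_std_BM_continuous[OF W]
  by (intro measurable_continuous_process[of "\<lambda>s \<omega>. norm (W s \<omega>)"] continuous_on_norm)

lemma BM1_fourth_moment:
  assumes B: "is_BM1 M B" and "0 \<le> u"
  shows "(\<integral>\<^sup>+\<omega>. ennreal (B u \<omega> ^ 4) \<partial>M) = ennreal (3 * u\<^sup>2)"
proof (cases "u = 0")
  case True
  then have "(\<integral>\<^sup>+\<omega>. ennreal (B u \<omega> ^ 4) \<partial>M) = (\<integral>\<^sup>+\<omega>. 0 \<partial>M)"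
    using is_BM1_zero[OF B] by (intro nn_integral_cong) auto
  then show ?thesis
    using True by simp
next
  case False
  with \<open>0 \<le> u\<close> have "0 < u"
    by simp
  have moment: "has_bochner_integral lborel (\<lambda>y. normal_density 0 (sqrt u) y * (y - 0) ^ (2 * 2))
      (fact (2 * 2) / ((2 / (sqrt u)\<^sup>2) ^ 2 * fact 2))"
    using \<open>0 < u\<close> by (intro normal_moment_even) simp
  have "(\<integral>\<^sup>+\<omega>. ennreal (B u \<omega> ^ 4) \<partial>M) = (\<integral>\<^sup>+\<omega>. ennreal ((B u \<omega> - B 0 \<omega>) ^ 4) \<partial>M)"
    using is_BM1_zero[OF B] by (intro nn_integral_cong) auto
  also have "\<dots> = (\<integral>\<^sup>+y. ennreal (normal_density 0 (sqrt u) y * (y - 0) ^ (2 * 2)) \<partial>lborel)"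
    using distributed_nn_integral[OF is_BM1_increment[OF B order_refl \<open>0 < u\<close>], of "\<lambda>y. ennreal (y ^ 4)"]
    by (simp add: ennreal_mult'' normal_density_nonneg)
  also have "\<dots> = ennreal (fact (2 * 2) / ((2 / (sqrt u)\<^sup>2) ^ 2 * fact 2))"
    using nn_integral_eq_integral[OF integrable.intros[OF moment]] has_bochner_integral_integral_eq[OF moment]
    by (simp add: normal_density_nonneg)
  also have "\<dots> = ennreal (3 * u\<^sup>2)"
    using \<open>0 < u\<close> by (simp add: fact_numeral power2_eq_square field_simps)
  finally show ?thesis .
qed

lemma std_BM_fourth_moment_le:
  fixes W :: "real \<Rightarrow> 'w \<Rightarrow> real^'n" and u :: real
  assumes W: "is_std_BM M W" and "0 \<le> u"
  shows "(\<integral>\<^sup>+\<omega>. ennreal (norm (W u \<omega>) ^ 4) \<partial>M) \<le> ennreal (3 * (real CARD('n))\<^sup>2 * u\<^sup>2)"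
proof -
  have [measurable]: "(\<lambda>\<omega>. W u \<omega> $ i) \<in> borel_measurable M" for i
    using is_std_BM_component[OF W] \<open>0 \<le> u\<close> by (rule is_BM1_measurable)
  have "ennreal (norm (W u \<omega>) ^ 4) \<le> ennreal (real CARD('n)) * (\<Sum>i\<in>UNIV. ennreal ((W u \<omega> $ i) ^ 4))" for \<omega>
  proof -
    have "ennreal (norm (W u \<omega>) ^ 4) \<le> ennreal (real CARD('n) * (\<Sum>i\<in>UNIV. (W u \<omega> $ i) ^ 4))"
      by (rule ennreal_leI[OF norm_vec_power4_le])
    then show ?thesis
      by (simp add: ennreal_mult'' sum_nonneg)
  qed
  then have "(\<integral>\<^sup>+\<omega>. ennreal (norm (W u \<omega>) ^ 4) \<partial>M)
      \<le> (\<integral>\<^sup>+\<omega>. ennreal (real CARD('n)) * (\<Sum>i\<in>UNIV. ennreal ((W u \<omega> $ i) ^ 4)) \<partial>M)"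
    by (rule nn_integral_mono)
  also have "\<dots> = ennreal (real CARD('n)) * (\<integral>\<^sup>+\<omega>. (\<Sum>i\<in>UNIV. ennreal ((W u \<omega> $ i) ^ 4)) \<partial>M)"
    by (rule nn_integral_cmult) measurable
  also have "\<dots> = ennreal (real CARD('n)) * (\<Sum>i\<in>(UNIV :: 'n set). ennreal (3 * u\<^sup>2))"
    using BM1_fourth_moment[OF is_std_BM_component[OF W] \<open>0 \<le> u\<close>]
    by (subst nn_integral_sum) auto
  also have "\<dots> = ennreal (real CARD('n) * (real CARD('n) * (3 * u\<^sup>2)))"
    by (simp add: ennreal_of_nat_eq_real_of_nat ennreal_mult)
  also have "\<dots> = ennreal (3 * (real CARD('n))\<^sup>2 * u\<^sup>2)"
    by (simp add: power2_eq_square mult_ac)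
  finally show ?thesis .
qed

lemma exp_smoothing_BM_measurable:
  fixes W :: "real \<Rightarrow> 'w \<Rightarrow> real^'n" and \<epsilon> :: real
  assumes W: "is_std_BM M W" and "0 < \<epsilon>"
  shows "(\<lambda>z. exp_smoothing \<epsilon> (\<lambda>u. norm (W u (snd z))) (fst z)) \<in> borel_measurable (lborel \<Otimes>\<^sub>M M)"
proof -
  (* Unlike the Henstock-Kurzweil integral, its Lebesgue form q is jointly measurable by Tonelli. *)
  define q where "q z = (\<integral>\<^sup>+u. ennreal (indicator {0..fst z} u * exp (- (fst z - u) / \<epsilon>)
      * norm (W (max u 0) (snd z))) \<partial>lborel)" for z
  note W_meas = is_std_BM_norm_jointly_measurable[OF W]
  have "(\<lambda>p :: (real \<times> 'w) \<times> real. (snd p, snd (fst p)))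
      \<in> measurable ((lborel \<Otimes>\<^sub>M M) \<Otimes>\<^sub>M lborel) (lborel \<Otimes>\<^sub>M M)"
    by measurable
  from measurable_compose[OF this W_meas]
  have "(\<lambda>p :: (real \<times> 'w) \<times> real. norm (W (max (snd p) 0) (snd (fst p))))
      \<in> borel_measurable ((lborel \<Otimes>\<^sub>M M) \<Otimes>\<^sub>M lborel)"
    by simp
  moreover have "(\<lambda>p :: (real \<times> 'w) \<times> real. indicator {0..fst (fst p)} (snd p) :: real)
      \<in> borel_measurable ((lborel \<Otimes>\<^sub>M M) \<Otimes>\<^sub>M lborel)"
  proof -
    have "(\<lambda>p :: (real \<times> 'w) \<times> real. if 0 \<le> snd p \<and> snd p \<le> fst (fst p) then 1 else 0 :: real)
        \<in> borel_measurable ((lborel \<Otimes>\<^sub>M M) \<Otimes>\<^sub>M lborel)"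
      by measurable
    then show ?thesis
      by (simp add: indicator_def)
  qed
  ultimately have "q \<in> borel_measurable (lborel \<Otimes>\<^sub>M M)"
    unfolding q_def by (intro lborel.borel_measurable_nn_integral) (simp add: case_prod_beta'; measurable)
  moreover have "exp_smoothing \<epsilon> (\<lambda>u. norm (W u (snd z))) (fst z) = enn2real (q z)"
    if "z \<in> space (lborel \<Otimes>\<^sub>M M)" for z
  proof (cases "0 \<le> fst z")
    case True
    have cont: "continuous_on {0..fst z} (\<lambda>u. W u (snd z))"
      using is_std_BM_continuous_on_interval[OF W] that by (auto simp: space_pair_measure)
    have "q z = (\<integral>\<^sup>+u. ennreal (indicator {0..fst z} u * (exp (- (fst z - u) / \<epsilon>) * norm (W u (snd z)))) \<partial>lborel)"
      unfolding q_def by (intro nn_integral_cong) (auto simp: indicator_def)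
    also have "\<dots> = ennreal (exp_smoothing \<epsilon> (\<lambda>u. norm (W u (snd z))) (fst z))"
      unfolding exp_smoothing_def using cont \<open>0 < \<epsilon>\<close>
      by (intro nn_integral_interval_continuous continuous_intros) auto
    finally show ?thesis
      using exp_smoothing_nonneg[OF \<open>0 < \<epsilon>\<close>, of "fst z" "\<lambda>u. norm (W u (snd z))"] cont
      by (simp add: continuous_on_norm)
  next
    case False
    then show ?thesis
      by (simp add: q_def exp_smoothing_def)
  qed
  ultimately show ?thesis
    by (subst measurable_cong) auto
qed

lemma exp_smoothing_BM_fourth_moment_le:
  fixes W :: "real \<Rightarrow> 'w \<Rightarrow> real^'n" and \<epsilon> s :: real
  assumes W: "is_std_BM M W" and "0 < \<epsilon>" "0 \<le> s"
  shows "(\<integral>\<^sup>+\<omega>. ennreal (exp_smoothing \<epsilon> (\<lambda>u. norm (W u \<omega>)) s ^ 4) \<partial>M)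
    \<le> ennreal (3 * (real CARD('n))\<^sup>2 * \<epsilon> ^ 4 * s\<^sup>2)"
proof -
  interpret prob_space M
    using W by (simp add: is_std_BM_def)
  define k where "k u = exp (- (s - u) / \<epsilon>)" for u
  define I where "I \<omega> = (\<integral>\<^sup>+u. ennreal (indicator {0..s} u * k u * norm (W (max u 0) \<omega>) ^ 4) \<partial>lborel)" for \<omega>
  have k: "continuous_on {0..s} k" "\<And>u. 0 \<le> k u"
    unfolding k_def using \<open>0 < \<epsilon>\<close> by (auto intro!: continuous_intros)
  have W_meas: "(\<lambda>z. norm (W (max (fst z) 0) (snd z)) ^ 4) \<in> borel_measurable (lborel \<Otimes>\<^sub>M M)"
    using is_std_BM_norm_jointly_measurable[OF W] by measurable
  have moment: "(\<integral>\<^sup>+\<omega>. ennreal (norm (W (max u 0) \<omega>) ^ 4) \<partial>M) \<le> ennreal (3 * (real CARD('n))\<^sup>2 * s\<^sup>2)"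
    if "u \<in> {0..s}" for u
    using std_BM_fourth_moment_le[OF W, of u] that
    by (auto intro: order_trans ennreal_leI mult_left_mono power_mono)
  note tonelli = nn_integral_weighted_expectation_le[OF W_meas k moment]
  have "ennreal (exp_smoothing \<epsilon> (\<lambda>u. norm (W u \<omega>)) s ^ 4) \<le> ennreal (\<epsilon> ^ 3) * I \<omega>"
    if "\<omega> \<in> space M" for \<omega>
  proof -
    have cont: "continuous_on {0..s} (\<lambda>u. W u \<omega>)"
      using is_std_BM_continuous_on_interval[OF W that] .
    have "ennreal (exp_smoothing \<epsilon> (\<lambda>u. norm (W u \<omega>)) s ^ 4)
        \<le> ennreal (\<epsilon> ^ 3) * ennreal (integral {0..s} (\<lambda>u. k u * norm (W u \<omega>) ^ 4))"
      using exp_smoothing_power4_le[OF \<open>0 < \<epsilon>\<close> \<open>0 \<le> s\<close> continuous_on_norm[OF cont]] \<open>0 < \<epsilon>\<close>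
      by (simp add: k_def ennreal_leI flip: ennreal_mult')
    also have "ennreal (integral {0..s} (\<lambda>u. k u * norm (W u \<omega>) ^ 4)) = I \<omega>"
      unfolding I_def using k cont
      by (subst nn_integral_interval_continuous[symmetric])
        (auto intro!: nn_integral_cong continuous_intros simp: indicator_def)
    finally show ?thesis .
  qed
  then have "(\<integral>\<^sup>+\<omega>. ennreal (exp_smoothing \<epsilon> (\<lambda>u. norm (W u \<omega>)) s ^ 4) \<partial>M) \<le> ennreal (\<epsilon> ^ 3) * (\<integral>\<^sup>+\<omega>. I \<omega> \<partial>M)"
    using tonelli(1) unfolding I_def by (subst nn_integral_cmult[symmetric]) (auto intro!: nn_integral_mono)
  also have "\<dots> \<le> ennreal (\<epsilon> ^ 3) * ennreal (\<epsilon> * (3 * (real CARD('n))\<^sup>2 * s\<^sup>2))"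
  proof (rule mult_left_mono)
    have "integral {0..s} k \<le> \<epsilon>"
      unfolding k_def using integral_unique[OF has_integral_exp_kernel[OF \<open>0 < \<epsilon>\<close> \<open>0 \<le> s\<close>]] \<open>0 < \<epsilon>\<close>
      by simp
    then show "(\<integral>\<^sup>+\<omega>. I \<omega> \<partial>M) \<le> ennreal (\<epsilon> * (3 * (real CARD('n))\<^sup>2 * s\<^sup>2))"
      using tonelli(2) unfolding I_def by (auto elim!: order_trans intro!: ennreal_leI mult_right_mono)
  qed simp
  also have "\<dots> = ennreal (3 * (real CARD('n))\<^sup>2 * \<epsilon> ^ 4 * s\<^sup>2)"
    using \<open>0 < \<epsilon>\<close> by (simp add: power4_eq_xxxx power3_eq_cube mult_ac flip: ennreal_mult')
  finally show ?thesis .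
qed

lemma perturbation_size_BM_measurable:
  fixes W :: "real \<Rightarrow> 'w \<Rightarrow> real^'n" and v :: "'w \<Rightarrow> real^'n"
  assumes W: "is_std_BM M W" and "0 < \<epsilon>" and v: "v \<in> borel_measurable M"
  shows "(\<lambda>z. perturbation_size \<epsilon> c (v (snd z)) (\<lambda>u. W u (snd z)) (fst z)) \<in> borel_measurable (lborel \<Otimes>\<^sub>M M)"
proof -
  note [measurable] = exp_smoothing_BM_measurable[OF W \<open>0 < \<epsilon>\<close>] v
  show ?thesis
    unfolding perturbation_size_def by measurable
qed

lemma perturbation_size_fourth_moment_le:
  fixes W :: "real \<Rightarrow> 'w \<Rightarrow> real^'n" and v :: "'w \<Rightarrow> real^'n" and \<epsilon> s m :: real
  assumes W: "is_std_BM M W" and "0 < \<epsilon>" "0 \<le> s" and v: "v \<in> borel_measurable M"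
    and m: "(\<integral>\<^sup>+\<omega>. ennreal (norm (v \<omega>) ^ 4) \<partial>M) \<le> ennreal m" and "0 \<le> m"
  shows "(\<integral>\<^sup>+\<omega>. ennreal (perturbation_size \<epsilon> (sqrt (2 / \<epsilon>)) (v \<omega>) (\<lambda>u. W u \<omega>) s ^ 4) \<partial>M)
    \<le> ennreal (8 * \<epsilon> ^ 4 * m + 96 * (real CARD('n))\<^sup>2 * \<epsilon>\<^sup>2 * s\<^sup>2)"
proof -
  define c where "c = sqrt (2 / \<epsilon>)"
  define \<rho> where "\<rho> \<omega> = exp_smoothing \<epsilon> (\<lambda>u. norm (W u \<omega>)) s" for \<omega>
  have "c ^ 4 = (c\<^sup>2)\<^sup>2"
    by simp
  also have "\<dots> = 4 / \<epsilon>\<^sup>2"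
    using \<open>0 < \<epsilon>\<close> by (simp add: c_def power_divide)
  finally have c4: "c ^ 4 = 4 / \<epsilon>\<^sup>2" .
  have \<rho>_meas: "\<rho> \<in> borel_measurable M"
    using measurable_compose[OF measurable_Pair1'[of s lborel M] exp_smoothing_BM_measurable[OF W \<open>0 < \<epsilon>\<close>]]
    unfolding \<rho>_def[abs_def] by simp
  have "ennreal (perturbation_size \<epsilon> c (v \<omega>) (\<lambda>u. W u \<omega>) s ^ 4)
      \<le> ennreal (8 * \<epsilon> ^ 4) * ennreal (norm (v \<omega>) ^ 4) + ennreal (8 * c ^ 4) * ennreal (\<rho> \<omega> ^ 4)" for \<omega>
  proof -
    have "perturbation_size \<epsilon> c (v \<omega>) (\<lambda>u. W u \<omega>) s ^ 4 \<le> 8 * ((\<epsilon> * norm (v \<omega>)) ^ 4 + (c * \<rho> \<omega>) ^ 4)"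
      unfolding perturbation_size_def \<rho>_def by (rule power4_add_le)
    also have "\<dots> = 8 * \<epsilon> ^ 4 * norm (v \<omega>) ^ 4 + 8 * c ^ 4 * \<rho> \<omega> ^ 4"
      by (simp add: power_mult_distrib algebra_simps)
    finally have "ennreal (perturbation_size \<epsilon> c (v \<omega>) (\<lambda>u. W u \<omega>) s ^ 4)
        \<le> ennreal (8 * \<epsilon> ^ 4 * norm (v \<omega>) ^ 4 + 8 * c ^ 4 * \<rho> \<omega> ^ 4)"
      by (rule ennreal_leI)
    also have "\<dots> = ennreal (8 * \<epsilon> ^ 4) * ennreal (norm (v \<omega>) ^ 4) + ennreal (8 * c ^ 4) * ennreal (\<rho> \<omega> ^ 4)"
      using \<open>0 < \<epsilon>\<close> by (simp add: ennreal_plus ennreal_mult' del: ennreal_plus_if)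
    finally show ?thesis .
  qed
  then have "(\<integral>\<^sup>+\<omega>. ennreal (perturbation_size \<epsilon> c (v \<omega>) (\<lambda>u. W u \<omega>) s ^ 4) \<partial>M)
      \<le> (\<integral>\<^sup>+\<omega>. ennreal (8 * \<epsilon> ^ 4) * ennreal (norm (v \<omega>) ^ 4) + ennreal (8 * c ^ 4) * ennreal (\<rho> \<omega> ^ 4) \<partial>M)"
    by (rule nn_integral_mono)
  also have "\<dots> = ennreal (8 * \<epsilon> ^ 4) * (\<integral>\<^sup>+\<omega>. ennreal (norm (v \<omega>) ^ 4) \<partial>M)
        + ennreal (8 * c ^ 4) * (\<integral>\<^sup>+\<omega>. ennreal (\<rho> \<omega> ^ 4) \<partial>M)"
  proof -
    have "(\<lambda>\<omega>. ennreal (norm (v \<omega>) ^ 4)) \<in> borel_measurable M"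
      using v by measurable
    moreover have "(\<lambda>\<omega>. ennreal (\<rho> \<omega> ^ 4)) \<in> borel_measurable M"
      using \<rho>_meas by measurable
    ultimately show ?thesis
      by (simp add: nn_integral_add nn_integral_cmult)
  qed
  also have "\<dots> \<le> ennreal (8 * \<epsilon> ^ 4) * ennreal m + ennreal (8 * c ^ 4) * ennreal (3 * (real CARD('n))\<^sup>2 * \<epsilon> ^ 4 * s\<^sup>2)"
    unfolding \<rho>_def
    by (intro add_mono mult_left_mono m exp_smoothing_BM_fourth_moment_le[OF W \<open>0 < \<epsilon>\<close> \<open>0 \<le> s\<close>] zero_le)
  also have "\<dots> = ennreal (8 * \<epsilon> ^ 4 * m) + ennreal (8 * c ^ 4 * (3 * (real CARD('n))\<^sup>2 * \<epsilon> ^ 4 * s\<^sup>2))"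
    by (simp only: ennreal_mult'[of "8 * \<epsilon> ^ 4"] ennreal_mult'[of "8 * c ^ 4"] zero_le_mult_iff zero_le_numeral
        zero_le_even_power even_numeral simp_thms)
  also have "\<dots> = ennreal (8 * \<epsilon> ^ 4 * m + 8 * c ^ 4 * (3 * (real CARD('n))\<^sup>2 * \<epsilon> ^ 4 * s\<^sup>2))"
    using \<open>0 \<le> m\<close> by (intro ennreal_plus[symmetric]) auto
  also have "8 * c ^ 4 * (3 * (real CARD('n))\<^sup>2 * \<epsilon> ^ 4 * s\<^sup>2) = 96 * (real CARD('n))\<^sup>2 * \<epsilon>\<^sup>2 * s\<^sup>2"
    unfolding c4 using \<open>0 < \<epsilon>\<close> by (simp add: power4_eq_xxxx power2_eq_square field_simps)
  finally show ?thesis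
    by (simp add: c_def)
qed

lemma perturbation_energy_expectation_le:
  fixes W :: "real \<Rightarrow> 'w \<Rightarrow> real^'n" and v :: "'w \<Rightarrow> real^'n" and \<epsilon> \<kappa> m t :: real
  assumes W: "is_std_BM M W" and "0 < \<epsilon>" "0 \<le> t" "0 \<le> \<kappa>" and v: "v \<in> borel_measurable M"
    and m: "(\<integral>\<^sup>+\<omega>. ennreal (norm (v \<omega>) ^ 4) \<partial>M) \<le> ennreal m" and "0 \<le> m"
  defines "P \<equiv> \<lambda>\<omega>. perturbation_size \<epsilon> (sqrt (2 / \<epsilon>)) (v \<omega>) (\<lambda>u. W u \<omega>)"
    and "\<beta> \<equiv> 8 * \<epsilon> ^ 4 * m + 96 * (real CARD('n))\<^sup>2 * \<epsilon>\<^sup>2 * t\<^sup>2"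
  shows "(\<lambda>\<omega>. perturbation_energy \<kappa> t (P \<omega>)) \<in> borel_measurable M"
    and "(\<integral>\<^sup>+\<omega>. perturbation_energy \<kappa> t (P \<omega>) \<partial>M) \<le> ennreal ((64 + \<kappa> * t) * \<beta>)"
proof -
  interpret prob_space M
    using W by (simp add: is_std_BM_def)
  have "0 \<le> \<beta>"
    using \<open>0 \<le> m\<close> by (simp add: \<beta>_def)
  have P_meas: "(\<lambda>z. P (snd z) (fst z) ^ 4) \<in> borel_measurable (lborel \<Otimes>\<^sub>M M)"
    using perturbation_size_BM_measurable[OF W \<open>0 < \<epsilon>\<close> v] unfolding P_def by measurable
  have Pt_meas: "(\<lambda>\<omega>. P \<omega> t ^ 4) \<in> borel_measurable M"
    using measurable_compose[OF measurable_Pair1'[of t lborel M] P_meas] by simp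
  have moment: "(\<integral>\<^sup>+\<omega>. ennreal (P \<omega> s ^ 4) \<partial>M) \<le> ennreal \<beta>" if "s \<in> {0..t}" for s
  proof -
    have "(\<integral>\<^sup>+\<omega>. ennreal (P \<omega> s ^ 4) \<partial>M) \<le> ennreal (8 * \<epsilon> ^ 4 * m + 96 * (real CARD('n))\<^sup>2 * \<epsilon>\<^sup>2 * s\<^sup>2)"
      unfolding P_def using that by (intro perturbation_size_fourth_moment_le[OF W \<open>0 < \<epsilon>\<close> _ v m \<open>0 \<le> m\<close>]) auto
    also have "\<dots> \<le> ennreal \<beta>"
      unfolding \<beta>_def using that by (intro ennreal_leI add_left_mono mult_left_mono power_mono) auto
    finally show ?thesis .
  qed
  have tonelli: "(\<lambda>\<omega>. \<integral>\<^sup>+s. ennreal (indicator {0..t} s * P \<omega> s ^ 4) \<partial>lborel) \<in> borel_measurable M"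
      "(\<integral>\<^sup>+\<omega>. (\<integral>\<^sup>+s. ennreal (indicator {0..t} s * P \<omega> s ^ 4) \<partial>lborel) \<partial>M) \<le> ennreal (t * \<beta>)"
    using nn_integral_weighted_expectation_le[where t = t, OF P_meas continuous_on_const zero_le_one moment] \<open>0 \<le> t\<close>
    by simp_all
  have term1: "(\<lambda>\<omega>. ennreal (64 * P \<omega> t ^ 4)) \<in> borel_measurable M"
    using Pt_meas by measurable
  have term2: "(\<lambda>\<omega>. ennreal \<kappa> * (\<integral>\<^sup>+s. ennreal (indicator {0..t} s * P \<omega> s ^ 4) \<partial>lborel)) \<in> borel_measurable M"
    using tonelli(1) by measurable
  show "(\<lambda>\<omega>. perturbation_energy \<kappa> t (P \<omega>)) \<in> borel_measurable M"
    unfolding perturbation_energy_def using term1 term2 by (rule borel_measurable_add)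
  have "(\<integral>\<^sup>+\<omega>. perturbation_energy \<kappa> t (P \<omega>) \<partial>M) = ennreal 64 * (\<integral>\<^sup>+\<omega>. ennreal (P \<omega> t ^ 4) \<partial>M)
      + ennreal \<kappa> * (\<integral>\<^sup>+\<omega>. (\<integral>\<^sup>+s. ennreal (indicator {0..t} s * P \<omega> s ^ 4) \<partial>lborel) \<partial>M)"
    unfolding perturbation_energy_def nn_integral_add[OF term1 term2] using Pt_meas tonelli(1)
    by (simp add: nn_integral_cmult ennreal_mult')
  also have "\<dots> \<le> ennreal 64 * ennreal \<beta> + ennreal \<kappa> * ennreal (t * \<beta>)"
    using moment[of t] tonelli(2) \<open>0 \<le> t\<close> by (intro add_mono mult_left_mono) auto
  also have "\<dots> = ennreal ((64 + \<kappa> * t) * \<beta>)"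
    using \<open>0 \<le> \<kappa>\<close> \<open>0 \<le> \<beta>\<close> \<open>0 \<le> t\<close>
    by (simp add: ennreal_mult' ennreal_plus distrib_right mult.assoc del: ennreal_plus_if)
  finally show "(\<integral>\<^sup>+\<omega>. perturbation_energy \<kappa> t (P \<omega>) \<partial>M) \<le> ennreal ((64 + \<kappa> * t) * \<beta>)" .
qed

lemma langevin_solution_mild:
  fixes b :: "real^'n \<Rightarrow> real \<Rightarrow> real^'n"
  assumes "0 < \<epsilon>" and W: "is_std_BM M W" and b: "continuous_on (UNIV \<times> {0..}) (\<lambda>(y, s). b y s)"
    and sol: "langevin_solution M b \<epsilon> x W X V"
  shows "AE \<omega> in M. langevin_mild \<epsilon> b x (V 0 \<omega>) (\<lambda>s. W s \<omega>) (\<lambda>s. X s \<omega>)"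
proof -
  have "AE \<omega> in M. continuous_on {0..} (\<lambda>t. X t \<omega>) \<and> continuous_on {0..} (\<lambda>t. V t \<omega>) \<and>
      (\<forall>t\<ge>0. X t \<omega> = x + integral {0..t} (\<lambda>s. V s \<omega>) \<and>
        V t \<omega> = V 0 \<omega> + (1 / \<epsilon>) *\<^sub>R integral {0..t} (\<lambda>s. b (X s \<omega>) s - V s \<omega>) + sqrt (2 / \<epsilon>) *\<^sub>R W t \<omega>)"
    using sol unfolding langevin_solution_def by (rule conjunct2)
  then show ?thesis
    using AE_space
  proof eventually_elim
    case (elim \<omega>)
    note sol_\<omega> = elim(1)[THEN conjunct2, THEN conjunct2, rule_format]
    have X: "continuous_on {0..} (\<lambda>t. X t \<omega>)" and V: "continuous_on {0..} (\<lambda>t. V t \<omega>)"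
      using elim(1) by blast+
    show ?case
      unfolding langevin_mild_def
    proof (intro conjI allI impI X)
      fix s :: real
      assume "0 \<le> s"
      have sub: "{0..s} \<subseteq> {0..}"
        by auto
      have "integral {0..s} (\<lambda>u. V u \<omega>) = (\<epsilon> * (1 - exp (- s / \<epsilon>))) *\<^sub>R V 0 \<omega>
          + integral {0..s} (\<lambda>u. (1 - exp (- (s - u) / \<epsilon>)) *\<^sub>R b (X u \<omega>) u)
          + sqrt (2 / \<epsilon>) *\<^sub>R integral {0..s} (\<lambda>u. exp (- (s - u) / \<epsilon>) *\<^sub>R W u \<omega>)"
      proof (rule langevin_position_formula[OF \<open>0 < \<epsilon>\<close> \<open>0 \<le> s\<close>])
        show "continuous_on {0..s} (\<lambda>u. V u \<omega>)"
          using V sub by (rule continuous_on_subset)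
        show "continuous_on {0..s} (\<lambda>u. W u \<omega>)"
          using is_std_BM_continuous_on_interval[OF W \<open>\<omega> \<in> space M\<close>] .
        show "continuous_on {0..s} (\<lambda>u. b (X u \<omega>) u)"
          using b continuous_on_subset[OF X sub] by (rule continuous_on_compose_path)
        show "V t \<omega> = V 0 \<omega> + (1 / \<epsilon>) *\<^sub>R integral {0..t} (\<lambda>u. b (X u \<omega>) u - V u \<omega>)
            + sqrt (2 / \<epsilon>) *\<^sub>R W t \<omega>" if "t \<in> {0..s}" for t
          using sol_\<omega>[of t] that by simp
      qed
      then show "X s \<omega> = x + (\<epsilon> * (1 - exp (- s / \<epsilon>))) *\<^sub>R V 0 \<omega>
          + integral {0..s} (\<lambda>u. (1 - exp (- (s - u) / \<epsilon>)) *\<^sub>R b (X u \<omega>) u)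
          + sqrt (2 / \<epsilon>) *\<^sub>R integral {0..s} (\<lambda>u. exp (- (s - u) / \<epsilon>) *\<^sub>R W u \<omega>)"
        using sol_\<omega>[OF \<open>0 \<le> s\<close>, THEN conjunct1] by (simp only: add.assoc)
    qed
  qed
qed

section \<open>Centered fourth moments by decoupling\<close>

context prob_space
begin

context
  fixes Y :: "'a \<Rightarrow> 'b::{banach, second_countable_topology}" and H :: "'a \<Rightarrow> ennreal" and P :: "'a \<Rightarrow> bool"
  assumes Y: "Y \<in> borel_measurable M" and H: "H \<in> borel_measurable M"
    and H_finite: "(\<integral>\<^sup>+\<omega>. H \<omega> \<partial>M) < \<infinity>"
    and P: "AE \<omega> in M. P \<omega>"
    and pair: "\<And>\<omega> \<omega>'. P \<omega> \<Longrightarrow> P \<omega>' \<Longrightarrow> ennreal (norm (Y \<omega> - Y \<omega>') ^ 4) \<le> H \<omega> + H \<omega>'"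
begin

lemma nn_integral_pairwise_le:
  assumes "P \<omega>"
  shows "(\<integral>\<^sup>+\<omega>'. ennreal (norm (Y \<omega> - Y \<omega>') ^ 4) \<partial>M) \<le> H \<omega> + (\<integral>\<^sup>+\<omega>'. H \<omega>' \<partial>M)"
proof -
  have "(\<integral>\<^sup>+\<omega>'. ennreal (norm (Y \<omega> - Y \<omega>') ^ 4) \<partial>M) \<le> (\<integral>\<^sup>+\<omega>'. H \<omega> + H \<omega>' \<partial>M)"
    using P by (intro nn_integral_mono_AE) (auto elim!: AE_mp intro: pair[OF assms])
  also have "\<dots> = H \<omega> + (\<integral>\<^sup>+\<omega>'. H \<omega>' \<partial>M)"
    using H emeasure_space_1 by (simp add: nn_integral_add)
  finally show ?thesis .
qed

lemma integrable_of_pairwise_fourth_moment: "integrable M Y"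
proof -
  have "AE \<omega> in M. P \<omega> \<and> H \<omega> \<noteq> \<infinity>"
    using P nn_integral_PInf_AE[OF H] H_finite by auto
  then obtain \<omega>\<^sub>0 where "P \<omega>\<^sub>0" "H \<omega>\<^sub>0 \<noteq> \<infinity>"
    using eventually_happens ae_filter_bot by blast
  have "norm (Y \<omega>) \<le> (norm (Y \<omega>\<^sub>0) + 1) + norm (Y \<omega>\<^sub>0 - Y \<omega>) ^ 4" for \<omega>
    using norm_triangle_sub[of "Y \<omega>" "Y \<omega>\<^sub>0"] le_one_plus_power4[of "norm (Y \<omega>\<^sub>0 - Y \<omega>)"]
    by (simp add: norm_minus_commute)
  then have "(\<integral>\<^sup>+\<omega>. ennreal (norm (Y \<omega>)) \<partial>M)
      \<le> (\<integral>\<^sup>+\<omega>. ennreal (norm (Y \<omega>\<^sub>0) + 1) + ennreal (norm (Y \<omega>\<^sub>0 - Y \<omega>) ^ 4) \<partial>M)"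
    by (intro nn_integral_mono) (simp add: ennreal_leI flip: ennreal_plus)
  also have "\<dots> = ennreal (norm (Y \<omega>\<^sub>0) + 1) + (\<integral>\<^sup>+\<omega>. ennreal (norm (Y \<omega>\<^sub>0 - Y \<omega>) ^ 4) \<partial>M)"
    using Y emeasure_space_1 by (simp add: nn_integral_add)
  also have "\<dots> < \<infinity>"
    using nn_integral_pairwise_le[OF \<open>P \<omega>\<^sub>0\<close>] \<open>H \<omega>\<^sub>0 \<noteq> \<infinity>\<close> H_finite
    by (simp add: ennreal_add_less_top le_less_trans top.not_eq_extremum)
  finally show ?thesis
    by (intro integrableI_bounded Y)
qed

lemma centered_fourth_moment_le_pairwise:
  "(\<integral>\<^sup>+\<omega>. ennreal (norm (Y \<omega> - expectation Y) ^ 4) \<partial>M) \<le> 2 * (\<integral>\<^sup>+\<omega>. H \<omega> \<partial>M)"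
proof -
  have "ennreal (norm (Y \<omega> - expectation Y) ^ 4) \<le> (\<integral>\<^sup>+\<omega>'. ennreal (norm (Y \<omega> - Y \<omega>') ^ 4) \<partial>M)" for \<omega>
  proof -
    have "Y \<omega> - expectation Y = (\<integral>\<omega>'. (Y \<omega> - Y \<omega>') \<partial>M)"
      using integrable_of_pairwise_fourth_moment by (simp add: prob_space)
    then have "norm (Y \<omega> - expectation Y) ^ 4 \<le> (\<integral>\<omega>'. norm (Y \<omega> - Y \<omega>') \<partial>M) ^ 4"
      by (auto intro!: power_mono integral_norm_bound)
    moreover have "ennreal ((\<integral>\<omega>'. norm (Y \<omega> - Y \<omega>') \<partial>M) ^ 4) \<le> (\<integral>\<^sup>+\<omega>'. ennreal (norm (Y \<omega> - Y \<omega>') ^ 4) \<partial>M)"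
      using Y by (intro expectation_power4_le) measurable
    ultimately show ?thesis
      by (rule order_trans[OF ennreal_leI])
  qed
  then have "(\<integral>\<^sup>+\<omega>. ennreal (norm (Y \<omega> - expectation Y) ^ 4) \<partial>M) \<le> (\<integral>\<^sup>+\<omega>. H \<omega> + (\<integral>\<^sup>+\<omega>'. H \<omega>' \<partial>M) \<partial>M)"
    using P by (intro nn_integral_mono_AE) (auto elim!: AE_mp intro: order_trans nn_integral_pairwise_le)
  also have "\<dots> = 2 * (\<integral>\<^sup>+\<omega>. H \<omega> \<partial>M)"
    using H emeasure_space_1 by (simp add: nn_integral_add mult_2)
  finally show ?thesis .
qed

end

end

lemma smooth_bounded_lipschitz_on:
  fixes f :: "'a::euclidean_space \<Rightarrow> 'b::real_normed_vector"
  assumes smooth: "smooth_bounded f S" and "convex S"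
  obtains L where "L-lipschitz_on S f"
proof -
  obtain Df :: "'a list \<Rightarrow> 'a \<Rightarrow> 'b" where
    Df0: "\<forall>z\<in>S. Df [] z = f z" and
    Df: "\<forall>us. \<forall>z\<in>S. (Df us has_derivative (\<lambda>h. Df (h # us) z)) (at z within S)" and
    bounded: "\<forall>k. \<exists>B. \<forall>us z. length us = k \<longrightarrow> set us \<subseteq> Basis \<longrightarrow> z \<in> S \<longrightarrow> norm (Df us z) \<le> B"
    using smooth unfolding smooth_bounded_def by blast
  obtain B where B: "\<And>us z. length us = 1 \<Longrightarrow> set us \<subseteq> Basis \<Longrightarrow> z \<in> S \<Longrightarrow> norm (Df us z) \<le> B"
    using bounded by blast
  define L where "L = real DIM('a) * max B 0"
  have deriv: "(f has_derivative (\<lambda>h. Df [h] z)) (at z within S)" if "z \<in> S" for z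
  proof (rule has_derivative_transform[OF that])
    show "\<And>x. x \<in> S \<Longrightarrow> f x = Df [] x"
      using Df0 by auto
    show "(Df [] has_derivative (\<lambda>h. Df [h] z)) (at z within S)"
      using Df that by blast
  qed
  have "onorm (\<lambda>h. Df [h] z) \<le> L" if "z \<in> S" for z
  proof (rule onorm_le)
    fix h :: 'a
    have lin: "linear (\<lambda>h. Df [h] z)"
      using has_derivative_bounded_linear[OF deriv[OF that]] by (rule bounded_linear.linear)
    have "Df [h] z = Df [\<Sum>e\<in>Basis. (h \<bullet> e) *\<^sub>R e] z"
      by (simp add: euclidean_representation)
    also have "\<dots> = (\<Sum>e\<in>Basis. (h \<bullet> e) *\<^sub>R Df [e] z)"
      by (simp only: linear_sum[OF lin, unfolded o_def] linear_scale[OF lin])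
    finally have "norm (Df [h] z) \<le> (\<Sum>e\<in>(Basis :: 'a set). norm ((h \<bullet> e) *\<^sub>R Df [e] z))"
      by (metis norm_sum)
    also have "\<dots> \<le> (\<Sum>e\<in>(Basis :: 'a set). norm h * max B 0)"
    proof (rule sum_mono)
      fix e :: 'a
      assume "e \<in> Basis"
      then have "\<bar>h \<bullet> e\<bar> \<le> norm h" "norm (Df [e] z) \<le> max B 0"
        using Basis_le_norm B[of "[e]" z] that by auto
      then show "norm ((h \<bullet> e) *\<^sub>R Df [e] z) \<le> norm h * max B 0"
        by (simp add: mult_mono)
    qed
    finally show "norm (Df [h] z) \<le> L * norm h"
      by (simp add: L_def mult_ac)
  qed
  then have "norm (f z - f z') \<le> L * norm (z - z')" if "z \<in> S" "z' \<in> S" for z z'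
    using differentiable_bound[OF \<open>convex S\<close> deriv] that by blast
  moreover have "0 \<le> L"
    by (simp add: L_def)
  ultimately show ?thesis
    by (intro that lipschitz_onI) (auto simp: dist_norm)
qed

lemma langevin_constant_le:
  fixes L t m \<epsilon> n :: real
  assumes "0 \<le> L" "0 \<le> t" "0 \<le> m"
  shows "2 * (64 + 64 * L ^ 4 * exp (4 * L * t) * t ^ 4) * (8 * \<epsilon> ^ 4 * m + 96 * n\<^sup>2 * \<epsilon>\<^sup>2 * t\<^sup>2)
    \<le> 12288 * (m + n\<^sup>2 + 1) * (1 + 256 * L ^ 4) * (\<epsilon>\<^sup>2 * t\<^sup>2 + \<epsilon> ^ 4) * exp ((4 * L + 1) * t)"
proof -
  have "2 * (64 + 64 * L ^ 4 * exp (4 * L * t) * t ^ 4) = 128 + 128 * L ^ 4 * exp (4 * L * t) * t ^ 4"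
    by simp
  also have "\<dots> \<le> 128 * exp ((4 * L + 1) * t) + 128 * L ^ 4 * exp (4 * L * t) * (256 * exp t)"
    using assms power4_le_exp[OF \<open>0 \<le> t\<close>] by (intro add_mono mult_left_mono) auto
  also have "\<dots> = 128 * (1 + 256 * L ^ 4) * exp ((4 * L + 1) * t)"
    by (simp add: algebra_simps flip: exp_add)
  finally have growth: "2 * (64 + 64 * L ^ 4 * exp (4 * L * t) * t ^ 4) \<le> 128 * (1 + 256 * L ^ 4) * exp ((4 * L + 1) * t)" .
  have size: "8 * \<epsilon> ^ 4 * m + 96 * n\<^sup>2 * \<epsilon>\<^sup>2 * t\<^sup>2 \<le> 96 * (m + n\<^sup>2 + 1) * (\<epsilon>\<^sup>2 * t\<^sup>2 + \<epsilon> ^ 4)"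
    using \<open>0 \<le> m\<close> by (simp add: algebra_simps)
  have "2 * (64 + 64 * L ^ 4 * exp (4 * L * t) * t ^ 4) * (8 * \<epsilon> ^ 4 * m + 96 * n\<^sup>2 * \<epsilon>\<^sup>2 * t\<^sup>2)
      \<le> (128 * (1 + 256 * L ^ 4) * exp ((4 * L + 1) * t)) * (96 * (m + n\<^sup>2 + 1) * (\<epsilon>\<^sup>2 * t\<^sup>2 + \<epsilon> ^ 4))"
    using \<open>0 \<le> m\<close> \<open>0 \<le> L\<close> by (intro mult_mono[OF growth size]) auto
  then show ?thesis
    by (simp add: algebra_simps)
qed

lemma langevin_centered_fourth_moment_le:
  fixes b :: "real^'n \<Rightarrow> real \<Rightarrow> real^'n" and M :: "'w measure" and W X V :: "real \<Rightarrow> 'w \<Rightarrow> real^'n"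
    and \<epsilon> L m t :: real
  assumes lipschitz: "L-lipschitz_on (UNIV \<times> {0..}) (\<lambda>(y, s). b y s)"
    and "0 < \<epsilon>" and W: "is_std_BM M W" and sol: "langevin_solution M b \<epsilon> x W X V"
    and m: "(\<integral>\<^sup>+\<omega>. ennreal (norm (V 0 \<omega> - b x 0) ^ 4) \<partial>M) \<le> ennreal m" and "0 \<le> m" and "0 \<le> t"
  shows "integrable M (X t)"
    and "(\<integral>\<^sup>+\<omega>. ennreal (norm (X t \<omega> - (\<integral>\<omega>'. X t \<omega>' \<partial>M)) ^ 4) \<partial>M)
      \<le> ennreal (2 * (64 + 64 * L ^ 4 * exp (4 * L * t) * t ^ 4)
          * (8 * \<epsilon> ^ 4 * m + 96 * (real CARD('n))\<^sup>2 * \<epsilon>\<^sup>2 * t\<^sup>2))"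
proof -
  interpret prob_space M
    using W by (simp add: is_std_BM_def)
  have "0 \<le> L"
    using lipschitz by (rule lipschitz_on_nonneg)
  have lip: "norm (b y1 s - b y2 s) \<le> L * norm (y1 - y2)" if "0 \<le> s" for y1 y2 s
    using lipschitz_onD[OF lipschitz, of "(y1, s)" "(y2, s)"] that by (simp add: dist_norm norm_Pair)
  have b: "continuous_on (UNIV \<times> {0..}) (\<lambda>(y, s). b y s)"
    using lipschitz by (rule lipschitz_on_continuous_on)
  define \<kappa> where "\<kappa> = 64 * L ^ 4 * exp (4 * L * t) * t ^ 3"
  define H where "H \<omega> = perturbation_energy \<kappa> t (perturbation_size \<epsilon> (sqrt (2 / \<epsilon>)) (V 0 \<omega> - b x 0) (\<lambda>u. W u \<omega>))"
    for \<omega>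
  define good where "good \<omega> \<longleftrightarrow> \<omega> \<in> space M \<and> langevin_mild \<epsilon> b x (V 0 \<omega>) (\<lambda>s. W s \<omega>) (\<lambda>s. X s \<omega>)" for \<omega>
  have "0 \<le> \<kappa>"
    using \<open>0 \<le> L\<close> \<open>0 \<le> t\<close> by (simp add: \<kappa>_def)
  have X_meas: "X t \<in> borel_measurable M" and "V 0 \<in> borel_measurable M"
    using sol \<open>0 \<le> t\<close> unfolding langevin_solution_def by blast+
  then have "(\<lambda>\<omega>. V 0 \<omega> - b x 0) \<in> borel_measurable M"
    by measurable
  note energy = perturbation_energy_expectation_le[OF W \<open>0 < \<epsilon>\<close> \<open>0 \<le> t\<close> \<open>0 \<le> \<kappa>\<close> this m \<open>0 \<le> m\<close>]
  have H_meas: "H \<in> borel_measurable M"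
    using energy(1) unfolding H_def[abs_def] .
  have EH: "(\<integral>\<^sup>+\<omega>. H \<omega> \<partial>M) \<le> ennreal ((64 + \<kappa> * t) * (8 * \<epsilon> ^ 4 * m + 96 * (real CARD('n))\<^sup>2 * \<epsilon>\<^sup>2 * t\<^sup>2))"
    using energy(2) by (simp add: H_def)
  have "AE \<omega> in M. good \<omega>"
    using langevin_solution_mild[OF \<open>0 < \<epsilon>\<close> W b sol] AE_space unfolding good_def by eventually_elim auto
  moreover have "ennreal (norm (X t \<omega> - X t \<omega>') ^ 4) \<le> H \<omega> + H \<omega>'" if "good \<omega>" "good \<omega>'" for \<omega> \<omega>'
    using that unfolding good_def H_def \<kappa>_def
    by (intro langevin_mild_diff_power4_le[OF \<open>0 < \<epsilon>\<close> \<open>0 \<le> L\<close> \<open>0 \<le> t\<close> lip b]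
        is_std_BM_continuous_on_interval[OF W]) auto
  moreover have "(\<integral>\<^sup>+\<omega>. H \<omega> \<partial>M) < \<infinity>"
    using EH by (simp add: le_less_trans)
  ultimately have "integrable M (X t)"
    and centered: "(\<integral>\<^sup>+\<omega>. ennreal (norm (X t \<omega> - expectation (X t)) ^ 4) \<partial>M) \<le> 2 * (\<integral>\<^sup>+\<omega>. H \<omega> \<partial>M)"
    using integrable_of_pairwise_fourth_moment[OF X_meas H_meas]
      centered_fourth_moment_le_pairwise[OF X_meas H_meas] by blast+
  then show "integrable M (X t)"
    by blast
  have "2 * (\<integral>\<^sup>+\<omega>. H \<omega> \<partial>M) \<le> ennreal (2 * ((64 + \<kappa> * t) * (8 * \<epsilon> ^ 4 * m + 96 * (real CARD('n))\<^sup>2 * \<epsilon>\<^sup>2 * t\<^sup>2)))"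
    using EH by (simp add: ennreal_mult' mult_left_mono)
  also have "2 * ((64 + \<kappa> * t) * (8 * \<epsilon> ^ 4 * m + 96 * (real CARD('n))\<^sup>2 * \<epsilon>\<^sup>2 * t\<^sup>2))
      = 2 * (64 + 64 * L ^ 4 * exp (4 * L * t) * t ^ 4) * (8 * \<epsilon> ^ 4 * m + 96 * (real CARD('n))\<^sup>2 * \<epsilon>\<^sup>2 * t\<^sup>2)"
    by (simp add: \<kappa>_def mult.assoc flip: power_Suc2)
  finally show "(\<integral>\<^sup>+\<omega>. ennreal (norm (X t \<omega> - (\<integral>\<omega>'. X t \<omega>' \<partial>M)) ^ 4) \<partial>M)
      \<le> ennreal (2 * (64 + 64 * L ^ 4 * exp (4 * L * t) * t ^ 4)
          * (8 * \<epsilon> ^ 4 * m + 96 * (real CARD('n))\<^sup>2 * \<epsilon>\<^sup>2 * t\<^sup>2))"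
    using centered by (rule order_trans[rotated])
qed

theorem lemma6p1:
  fixes b :: "real^'n \<Rightarrow> real \<Rightarrow> real^'n" and m4 :: real
  assumes smooth: "smooth_bounded (\<lambda>(y, t). b y t) (UNIV \<times> {0..})"
    and periodic: "\<And>y t v. (\<forall>i. v $ i \<in> \<int>) \<Longrightarrow> b (y + v) t = b y t"
  shows "\<exists>C1>0. \<exists>C2>0. \<forall>(M :: 'w measure) W X V (\<epsilon>::real) x (p::real).
     \<epsilon> > 0 \<and> p \<ge> 4 \<and> is_std_BM M W \<and>
     prob_space.indep_set M (sets (vimage_algebra (space M) (V 0) borel))
       (sets (vimage_algebra (space M) (\<lambda>\<omega>. \<lambda>t\<in>{0..}. W t \<omega>) (PiM {0..} (\<lambda>_. borel)))) \<and>
     langevin_solution M b \<epsilon> x W X V \<and>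
     integrable M (\<lambda>\<omega>. V 0 \<omega> - b x 0) \<and> (\<integral>\<omega>. (V 0 \<omega> - b x 0) \<partial>M) = 0 \<and>
     (\<integral>\<^sup>+\<omega>. ennreal (norm (V 0 \<omega> - b x 0) powr p) \<partial>M) < \<infinity> \<and>
     (\<integral>\<^sup>+\<omega>. ennreal (norm (V 0 \<omega> - b x 0) ^ 4) \<partial>M) \<le> ennreal m4
     \<longrightarrow> (\<forall>t\<ge>0. integrable M (X t) \<and>
           (\<integral>\<^sup>+\<omega>. ennreal (norm (X t \<omega> - (\<integral>\<omega>'. X t \<omega>' \<partial>M)) ^ 4) \<partial>M)
             \<le> ennreal (C1 * (\<epsilon>\<^sup>2 * t\<^sup>2 + \<epsilon> ^ 4) * exp (C2 * t)))"
proof -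
  obtain L where lipschitz: "L-lipschitz_on (UNIV \<times> {0..}) (\<lambda>(y, t). b y t)"
    using smooth_bounded_lipschitz_on[OF smooth] by (metis convex_Times convex_UNIV convex_real_interval(1))
  then have "0 \<le> L"
    by (rule lipschitz_on_nonneg)
  define C1 where "C1 = 12288 * (max m4 0 + (real CARD('n))\<^sup>2 + 1) * (1 + 256 * L ^ 4)"
  have "0 < C1"
    unfolding C1_def by (intro mult_pos_pos add_nonneg_pos add_pos_nonneg add_nonneg_nonneg) auto
  moreover have "0 < 4 * L + 1"
    using \<open>0 \<le> L\<close> by simp
  moreover have "integrable M (X t) \<and>
      (\<integral>\<^sup>+\<omega>. ennreal (norm (X t \<omega> - (\<integral>\<omega>'. X t \<omega>' \<partial>M)) ^ 4) \<partial>M)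
        \<le> ennreal (C1 * (\<epsilon>\<^sup>2 * t\<^sup>2 + \<epsilon> ^ 4) * exp ((4 * L + 1) * t))"
    if "0 < \<epsilon>" "is_std_BM M W" "langevin_solution M b \<epsilon> x W X V"
      "(\<integral>\<^sup>+\<omega>. ennreal (norm (V 0 \<omega> - b x 0) ^ 4) \<partial>M) \<le> ennreal m4" "0 \<le> t"
    for M :: "'w measure" and W X V \<epsilon> x t
  proof -
    have "(\<integral>\<^sup>+\<omega>. ennreal (norm (V 0 \<omega> - b x 0) ^ 4) \<partial>M) \<le> ennreal (max m4 0)"
      using that(4) by (rule order_trans) (simp add: ennreal_leI)
    note main = langevin_centered_fourth_moment_le[OF lipschitz that(1-3) this _ that(5)]
    show ?thesis
      using main(2) langevin_constant_le[OF \<open>0 \<le> L\<close> that(5), of "max m4 0" \<epsilon> "real CARD('n)"]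
      by (auto simp: main(1) C1_def mult_ac intro: order_trans ennreal_leI)
  qed
  ultimately show ?thesis
    by blast
qed

end
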